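(* Let $\mathcal R$ be a graded commutative 2-ring and let $(R,G,\pi,\{g_\gamma\},\{\varphi_x\})$ be a tightening of $\mathcal R$. Then restriction $\mathcal I\mapsto\mathrm r(\mathcal I)$ and extension $I\mapsto\mathrm e(I)$ are mutually inverse inclusion-preserving bijections between homogeneous ideals of $\mathcal R$ and homogeneous ideals of $R$, and they restrict to a homeomorphism $\operatorname{Spec}^h(R)\cong\operatorname{Spc}(\mathcal R)$.
   Context: A graded commutative 2-ring $\mathcal R$ is an essentially small preadditive symmetric monoidal category (tensor additive in each variable) in which all objects are invertible; its grading 2-group $\mathcal G$ is its groupoid of objects and isomorphisms, and $K_0(\mathcal G)$ is the group of isomorphism classes. A morphism $\tilde r$ is a translate of $r$ if $\tilde r=v\circ(g\otimes r)\circ u$ for an object $g$ and isomorphisms $u,v$. A homogeneous ideal of $\mathcal R$ is a two-sided ideal of morphisms closed under tensoring with objects; prime: proper and $s\circ r\in\mathfrak p\Rightarrow s\in\mathfrak p$ or $r\in\mathfrak p$; $\operatorname{Spc}(\mathcal R)$ is the set of primes with Zariski topology. For an abelian group $G$ (written multiplicatively), a $G$-graded commutative ring is a ring $R=\bigoplus_{x\in G}R_x$ with $1\in R_1$, $R_xR_y\subseteq R_{xy}$, and a function $\tau\colon G\times G\to Z(R)_1^\times$ that is symmetric, bilinear, and satisfies $rs=\tau(|r|,|s|)sr$ for homogeneous $r,s$; $\operatorname{Spec}^h(R)$ is its space of homogeneous primes with Zariski topology. A tightening consists of such an $R$, a surjective homomorphism $\pi\colon G\to K_0(\mathcal G)$,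 representatives $g_\gamma$ for $\gamma\in K_0(\mathcal G)$ with $g_1=\mathbb 1$, and group isomorphisms $\varphi_x\colon R_x\to\mathcal R(\mathbb 1,g_{\pi(x)})$ such that: (1) $\varphi_x(rs)=\varphi_x(r)\circ\varphi_1(s)$ for $s\in R_1$, $r\in R_x$; (2) for $r\in R_x$, $s\in R_y$, the morphism $(\varphi_x(r)\otimes g_{\pi(y)})\circ\varphi_y(s)$ (with implicit unitor) is a translate of $\varphi_{xy}(rs)$. Write $\varphi=\bigsqcup_x\varphi_x$ on homogeneous elements. For a homogeneous ideal $\mathcal I$ of $\mathcal R$, $\mathrm r(\mathcal I)$ is the additive closure in $R$ of $\varphi^{-1}(\mathcal I)$; for a homogeneous ideal $I$ of $R$, $\mathrm e(I)$ is the homogeneous ideal of $\mathcal R$ generated by $\varphi$ of the homogeneous elements of $I$. *)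

theory Defs
  imports "HOL-Analysis.Abstract_Topology"
begin

text \<open>A (small) preadditive symmetric monoidal category, presented concretely:
  objects of type 'o, morphisms of type 'm.  cmp g f is the composite g after f.\<close>

record ('o, 'm) two_ring =
  obj   :: "'o set"
  arr   :: "'m set"
  src   :: "'m \<Rightarrow> 'o"
  tgt   :: "'m \<Rightarrow> 'o"
  cmp   :: "'m \<Rightarrow> 'm \<Rightarrow> 'm"
  idm   :: "'o \<Rightarrow> 'm"
  madd  :: "'m \<Rightarrow> 'm \<Rightarrow> 'm"
  mzero :: "'o \<Rightarrow> 'o \<Rightarrow> 'm"
  mneg  :: "'m \<Rightarrow> 'm"
  tobj  :: "'o \<Rightarrow> 'o \<Rightarrow> 'o"
  tmor  :: "'m \<Rightarrow> 'm \<Rightarrow> 'm"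
  uobj  :: "'o"
  assc  :: "'o \<Rightarrow> 'o \<Rightarrow> 'o \<Rightarrow> 'm"
  lun   :: "'o \<Rightarrow> 'm"
  run   :: "'o \<Rightarrow> 'm"
  brd   :: "'o \<Rightarrow> 'o \<Rightarrow> 'm"

definition hom :: "('o, 'm, 'z) two_ring_scheme \<Rightarrow> 'o \<Rightarrow> 'o \<Rightarrow> 'm set" where
  "hom C a b = {f \<in> arr C. src C f = a \<and> tgt C f = b}"

definition iso_arr :: "('o, 'm, 'z) two_ring_scheme \<Rightarrow> 'm \<Rightarrow> bool" where
  "iso_arr C f \<longleftrightarrow> f \<in> arr C \<and> (\<exists>g \<in> hom C (tgt C f) (src C f).
      cmp C g f = idm C (src C f) \<and> cmp C f g = idm C (tgt C f))"

definition inv_arr :: "('o, 'm, 'z) two_ring_scheme \<Rightarrow> 'm \<Rightarrow> 'm" where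
  "inv_arr C f = (SOME g. g \<in> hom C (tgt C f) (src C f) \<and>
      cmp C g f = idm C (src C f) \<and> cmp C f g = idm C (tgt C f))"

definition isomorphic :: "('o, 'm, 'z) two_ring_scheme \<Rightarrow> 'o \<Rightarrow> 'o \<Rightarrow> bool" where
  "isomorphic C a b \<longleftrightarrow> (\<exists>u \<in> hom C a b. iso_arr C u)"

locale graded_comm_2ring =
  fixes C :: "('o, 'm, 'z) two_ring_scheme"
  assumes arr_src: "f \<in> arr C \<Longrightarrow> src C f \<in> obj C"
    and arr_tgt: "f \<in> arr C \<Longrightarrow> tgt C f \<in> obj C"
    and idm_hom: "a \<in> obj C \<Longrightarrow> idm C a \<in> hom C a a"
    and cmp_hom: "f \<in> hom C a b \<Longrightarrow> g \<in> hom C b c \<Longrightarrow> cmp C g f \<in> hom C a c"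
    and idm_left: "f \<in> hom C a b \<Longrightarrow> cmp C (idm C b) f = f"
    and idm_right: "f \<in> hom C a b \<Longrightarrow> cmp C f (idm C a) = f"
    and cmp_assoc: "f \<in> hom C a b \<Longrightarrow> g \<in> hom C b c \<Longrightarrow> h \<in> hom C c d \<Longrightarrow>
        cmp C h (cmp C g f) = cmp C (cmp C h g) f"
    and madd_hom: "f \<in> hom C a b \<Longrightarrow> g \<in> hom C a b \<Longrightarrow> madd C f g \<in> hom C a b"
    and mzero_hom: "a \<in> obj C \<Longrightarrow> b \<in> obj C \<Longrightarrow> mzero C a b \<in> hom C a b"
    and mneg_hom: "f \<in> hom C a b \<Longrightarrow> mneg C f \<in> hom C a b"
    and madd_assoc: "f \<in> hom C a b \<Longrightarrow> g \<in> hom C a b \<Longrightarrow> h \<in> hom C a b \<Longrightarrow>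
        madd C (madd C f g) h = madd C f (madd C g h)"
    and madd_comm: "f \<in> hom C a b \<Longrightarrow> g \<in> hom C a b \<Longrightarrow> madd C f g = madd C g f"
    and madd_zero: "f \<in> hom C a b \<Longrightarrow> madd C f (mzero C a b) = f"
    and madd_neg: "f \<in> hom C a b \<Longrightarrow> madd C f (mneg C f) = mzero C a b"
    and cmp_madd_left: "f \<in> hom C a b \<Longrightarrow> g \<in> hom C b c \<Longrightarrow> g' \<in> hom C b c \<Longrightarrow>
        cmp C (madd C g g') f = madd C (cmp C g f) (cmp C g' f)"
    and cmp_madd_right: "f \<in> hom C a b \<Longrightarrow> f' \<in> hom C a b \<Longrightarrow> g \<in> hom C b c \<Longrightarrow>
        cmp C g (madd C f f') = madd C (cmp C g f) (cmp C g f')"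
    and tobj_obj: "a \<in> obj C \<Longrightarrow> b \<in> obj C \<Longrightarrow> tobj C a b \<in> obj C"
    and tmor_hom: "f \<in> hom C a b \<Longrightarrow> g \<in> hom C c d \<Longrightarrow>
        tmor C f g \<in> hom C (tobj C a c) (tobj C b d)"
    and tmor_idm: "a \<in> obj C \<Longrightarrow> b \<in> obj C \<Longrightarrow>
        tmor C (idm C a) (idm C b) = idm C (tobj C a b)"
    and tmor_cmp: "f \<in> hom C a b \<Longrightarrow> f' \<in> hom C b c \<Longrightarrow> g \<in> hom C d e \<Longrightarrow> g' \<in> hom C e k \<Longrightarrow>
        tmor C (cmp C f' f) (cmp C g' g) = cmp C (tmor C f' g') (tmor C f g)"
    and tmor_madd_left: "f \<in> hom C a b \<Longrightarrow> f' \<in> hom C a b \<Longrightarrow> g \<in> hom C c d \<Longrightarrow>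
        tmor C (madd C f f') g = madd C (tmor C f g) (tmor C f' g)"
    and tmor_madd_right: "f \<in> hom C a b \<Longrightarrow> g \<in> hom C c d \<Longrightarrow> g' \<in> hom C c d \<Longrightarrow>
        tmor C f (madd C g g') = madd C (tmor C f g) (tmor C f g')"
    and uobj_obj: "uobj C \<in> obj C"
    and assc_hom: "a \<in> obj C \<Longrightarrow> b \<in> obj C \<Longrightarrow> c \<in> obj C \<Longrightarrow>
        assc C a b c \<in> hom C (tobj C (tobj C a b) c) (tobj C a (tobj C b c))"
    and assc_iso: "a \<in> obj C \<Longrightarrow> b \<in> obj C \<Longrightarrow> c \<in> obj C \<Longrightarrow> iso_arr C (assc C a b c)"
    and assc_nat: "f \<in> hom C a a' \<Longrightarrow> g \<in> hom C b b' \<Longrightarrow> h \<in> hom C c c' \<Longrightarrow>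
        cmp C (assc C a' b' c') (tmor C (tmor C f g) h)
          = cmp C (tmor C f (tmor C g h)) (assc C a b c)"
    and lun_hom: "a \<in> obj C \<Longrightarrow> lun C a \<in> hom C (tobj C (uobj C) a) a"
    and lun_iso: "a \<in> obj C \<Longrightarrow> iso_arr C (lun C a)"
    and lun_nat: "f \<in> hom C a b \<Longrightarrow>
        cmp C (lun C b) (tmor C (idm C (uobj C)) f) = cmp C f (lun C a)"
    and run_hom: "a \<in> obj C \<Longrightarrow> run C a \<in> hom C (tobj C a (uobj C)) a"
    and run_iso: "a \<in> obj C \<Longrightarrow> iso_arr C (run C a)"
    and run_nat: "f \<in> hom C a b \<Longrightarrow>
        cmp C (run C b) (tmor C f (idm C (uobj C))) = cmp C f (run C a)"
    and brd_hom: "a \<in> obj C \<Longrightarrow> b \<in> obj C \<Longrightarrow> brd C a b \<in> hom C (tobj C a b) (tobj C b a)"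
    and brd_nat: "f \<in> hom C a a' \<Longrightarrow> g \<in> hom C b b' \<Longrightarrow>
        cmp C (brd C a' b') (tmor C f g) = cmp C (tmor C g f) (brd C a b)"
    and brd_sym: "a \<in> obj C \<Longrightarrow> b \<in> obj C \<Longrightarrow>
        cmp C (brd C b a) (brd C a b) = idm C (tobj C a b)"
    and pentagon: "a \<in> obj C \<Longrightarrow> b \<in> obj C \<Longrightarrow> c \<in> obj C \<Longrightarrow> d \<in> obj C \<Longrightarrow>
        cmp C (assc C a b (tobj C c d)) (assc C (tobj C a b) c d)
          = cmp C (tmor C (idm C a) (assc C b c d))
              (cmp C (assc C a (tobj C b c) d) (tmor C (assc C a b c) (idm C d)))"
    and triangle: "a \<in> obj C \<Longrightarrow> b \<in> obj C \<Longrightarrow>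
        cmp C (tmor C (idm C a) (lun C b)) (assc C a (uobj C) b) = tmor C (run C a) (idm C b)"
    and hexagon: "a \<in> obj C \<Longrightarrow> b \<in> obj C \<Longrightarrow> c \<in> obj C \<Longrightarrow>
        cmp C (assc C b c a) (cmp C (brd C a (tobj C b c)) (assc C a b c))
          = cmp C (tmor C (idm C b) (brd C a c))
              (cmp C (assc C b a c) (tmor C (brd C a b) (idm C c)))"
    and invertible: "a \<in> obj C \<Longrightarrow> \<exists>b \<in> obj C. isomorphic C (tobj C a b) (uobj C)"

definition iso_class :: "('o, 'm, 'z) two_ring_scheme \<Rightarrow> 'o \<Rightarrow> 'o set" where
  "iso_class C a = {b \<in> obj C. isomorphic C a b}"

definition K0 :: "('o, 'm, 'z) two_ring_scheme \<Rightarrow> 'o set set" where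
  "K0 C = iso_class C ` obj C"

definition translate :: "('o, 'm, 'z) two_ring_scheme \<Rightarrow> 'm \<Rightarrow> 'm \<Rightarrow> bool" where
  "translate C t r \<longleftrightarrow> (\<exists>g \<in> obj C. \<exists>u v.
      u \<in> hom C (src C t) (tobj C g (src C r)) \<and> iso_arr C u \<and>
      v \<in> hom C (tobj C g (tgt C r)) (tgt C t) \<and> iso_arr C v \<and>
      t = cmp C v (cmp C (tmor C (idm C g) r) u))"

definition hideal_2r :: "('o, 'm, 'z) two_ring_scheme \<Rightarrow> 'm set \<Rightarrow> bool" where
  "hideal_2r C I \<longleftrightarrow> I \<subseteq> arr C
    \<and> (\<forall>a \<in> obj C. \<forall>b \<in> obj C. mzero C a b \<in> I)
    \<and> (\<forall>a b f g. f \<in> I \<inter> hom C a b \<longrightarrow> g \<in> I \<inter> hom C a b \<longrightarrow> madd C f g \<in> I)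
    \<and> (\<forall>f \<in> I. mneg C f \<in> I)
    \<and> (\<forall>f \<in> I. \<forall>g \<in> arr C. src C g = tgt C f \<longrightarrow> cmp C g f \<in> I)
    \<and> (\<forall>f \<in> I. \<forall>h \<in> arr C. tgt C h = src C f \<longrightarrow> cmp C f h \<in> I)
    \<and> (\<forall>f \<in> I. \<forall>a \<in> obj C. tmor C (idm C a) f \<in> I \<and> tmor C f (idm C a) \<in> I)"

definition prime_2r :: "('o, 'm, 'z) two_ring_scheme \<Rightarrow> 'm set \<Rightarrow> bool" where
  "prime_2r C P \<longleftrightarrow> hideal_2r C P \<and> P \<noteq> arr C
    \<and> (\<forall>r \<in> arr C. \<forall>s \<in> arr C. src C s = tgt C r \<longrightarrow> cmp C s r \<in> P \<longrightarrow> s \<in> P \<or> r \<in> P)"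

definition Spc :: "('o, 'm, 'z) two_ring_scheme \<Rightarrow> 'm set topology" where
  "Spc C = topology_generated_by
     {{P. prime_2r C P \<and> \<not> S \<subseteq> P} | S. S \<subseteq> arr C}"

text \<open>The ring is the whole type 'r; the grading group G is the whole type 'g, written
  additively (so the neutral element 1 of the paper is 0 here).  Rx x is the
  homogeneous component of degree x.\<close>

definition hdecomp :: "('g \<Rightarrow> 'r::ring_1 set) \<Rightarrow> 'r \<Rightarrow> ('g \<Rightarrow> 'r) \<Rightarrow> bool" where
  "hdecomp Rx r f \<longleftrightarrow> (\<forall>y. f y \<in> Rx y) \<and> finite {y. f y \<noteq> 0} \<and> r = (\<Sum>y \<in> {y. f y \<noteq> 0}. f y)"

definition hcomp :: "('g \<Rightarrow> 'r::ring_1 set) \<Rightarrow> 'g \<Rightarrow> 'r \<Rightarrow> 'r" where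
  "hcomp Rx x r = (THE f. hdecomp Rx r f) x"

definition add_subgroup :: "'r::ring_1 set \<Rightarrow> bool" where
  "add_subgroup A \<longleftrightarrow> 0 \<in> A \<and> (\<forall>a \<in> A. \<forall>b \<in> A. a + b \<in> A) \<and> (\<forall>a \<in> A. - a \<in> A)"

locale graded_comm_ring =
  fixes Rx :: "'g::ab_group_add \<Rightarrow> 'r::ring_1 set"
    and tau :: "'g \<Rightarrow> 'g \<Rightarrow> 'r"
  assumes Rx_subgroup: "add_subgroup (Rx x)"
    and direct_sum: "\<exists>!f. hdecomp Rx r f"
    and one_deg: "1 \<in> Rx 0"
    and Rx_mult: "r \<in> Rx x \<Longrightarrow> s \<in> Rx y \<Longrightarrow> r * s \<in> Rx (x + y)"
    and tau_deg: "tau x y \<in> Rx 0"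
    and tau_central: "tau x y * r = r * tau x y"
    and tau_unit: "\<exists>u. tau x y * u = 1 \<and> u * tau x y = 1"
    and tau_sym: "tau x y = tau y x"
    and tau_bilinear: "tau (x + x') y = tau x y * tau x' y"
    and graded_comm: "r \<in> Rx x \<Longrightarrow> s \<in> Rx y \<Longrightarrow> r * s = tau x y * (s * r)"

definition hideal_gr :: "('g \<Rightarrow> 'r::ring_1 set) \<Rightarrow> 'r set \<Rightarrow> bool" where
  "hideal_gr Rx I \<longleftrightarrow> add_subgroup I
    \<and> (\<forall>r \<in> I. \<forall>a. a * r \<in> I \<and> r * a \<in> I)
    \<and> (\<forall>r \<in> I. \<forall>x. hcomp Rx x r \<in> I)"

definition hprime_gr :: "('g \<Rightarrow> 'r::ring_1 set) \<Rightarrow> 'r set \<Rightarrow> bool" where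
  "hprime_gr Rx P \<longleftrightarrow> hideal_gr Rx P \<and> P \<noteq> UNIV
    \<and> (\<forall>x y r s. r \<in> Rx x \<longrightarrow> s \<in> Rx y \<longrightarrow> r * s \<in> P \<longrightarrow> r \<in> P \<or> s \<in> P)"

definition Spec_h :: "('g \<Rightarrow> 'r::ring_1 set) \<Rightarrow> 'r set topology" where
  "Spec_h Rx = topology_generated_by {{P. hprime_gr Rx P \<and> \<not> S \<subseteq> P} | S. True}"

locale tightening = graded_comm_2ring C + graded_comm_ring Rx tau
  for C :: "('o, 'm, 'z) two_ring_scheme"
    and Rx :: "'g::ab_group_add \<Rightarrow> 'r::ring_1 set"
    and tau :: "'g \<Rightarrow> 'g \<Rightarrow> 'r" +
  fixes pi :: "'g \<Rightarrow> 'o set"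
    and gr :: "'o set \<Rightarrow> 'o"
    and phi :: "'g \<Rightarrow> 'r \<Rightarrow> 'm"
  assumes pi_K0: "pi x \<in> K0 C"
    and pi_hom: "a \<in> pi x \<Longrightarrow> b \<in> pi y \<Longrightarrow> pi (x + y) = iso_class C (tobj C a b)"
    and pi_surj: "pi ` UNIV = K0 C"
    and gr_rep: "\<gamma> \<in> K0 C \<Longrightarrow> gr \<gamma> \<in> \<gamma>"
    and gr_unit: "gr (iso_class C (uobj C)) = uobj C"
    and phi_bij: "bij_betw (phi x) (Rx x) (hom C (uobj C) (gr (pi x)))"
    and phi_add: "r \<in> Rx x \<Longrightarrow> s \<in> Rx x \<Longrightarrow> phi x (r + s) = madd C (phi x r) (phi x s)"
    and phi_mult_deg0: "r \<in> Rx x \<Longrightarrow> s \<in> Rx 0 \<Longrightarrow> phi x (r * s) = cmp C (phi x r) (phi 0 s)"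
    and phi_mult: "r \<in> Rx x \<Longrightarrow> s \<in> Rx y \<Longrightarrow>
        translate C
          (cmp C (tmor C (phi x r) (idm C (gr (pi y))))
             (cmp C (inv_arr C (lun C (gr (pi y)))) (phi y s)))
          (phi (x + y) (r * s))"

definition restr :: "('g \<Rightarrow> 'r::ring_1 set) \<Rightarrow> ('g \<Rightarrow> 'r \<Rightarrow> 'm) \<Rightarrow> 'm set \<Rightarrow> 'r set" where
  "restr Rx phi I = \<Inter>{A. add_subgroup A \<and> {r. \<exists>x. r \<in> Rx x \<and> phi x r \<in> I} \<subseteq> A}"

definition extn :: "('o, 'm, 'z) two_ring_scheme \<Rightarrow> ('g \<Rightarrow> 'r::ring_1 set) \<Rightarrow> ('g \<Rightarrow> 'r \<Rightarrow> 'm)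
    \<Rightarrow> 'r set \<Rightarrow> 'm set" where
  "extn C Rx phi I = \<Inter>{J. hideal_2r C J \<and> {phi x r | x r. r \<in> Rx x \<and> r \<in> I} \<subseteq> J}"

end

theory Submission
  imports Defs
begin

(* Fix an object a.  Since every object is invertible, a \<otimes> - is fully faithful, and choosing
   an isomorphism v : a \<otimes> g\<^sub>x \<cong> b identifies hom(a, b) with hom(\<one>, g\<^sub>x) = \<phi>\<^sub>x(R\<^sub>x).
   Hence every morphism of the 2-ring is a translate of some \<phi>\<^sub>x(r), a composite is a
   translate of the product of the corresponding homogeneous elements, and if \<phi>\<^sub>y(s) is a
   translate of \<phi>\<^sub>x(r) then s = u r c for homogeneous u, c.  Homogeneous ideals of the 2-ring
   are closed under translates, so an ideal is determined by the homogeneous elements it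
   contains, and the extension of J consists of the morphisms f such that r \<in> J whenever f is
   a translate of \<phi>\<^sub>x(r).  This makes restriction and extension mutually inverse and monotone,
   and both preserve primes.  The basic opens of both spectra are the primes not containing a
   given ideal, so the bijection of primes is a homeomorphism. *)

context graded_comm_2ring
begin

lemma hom_iff: "f \<in> hom C a b \<longleftrightarrow> f \<in> arr C \<and> src C f = a \<and> tgt C f = b"
  by (simp add: hom_def)

lemma arr_in_hom: "f \<in> arr C \<Longrightarrow> f \<in> hom C (src C f) (tgt C f)"
  by (simp add: hom_def)

declare arr_src [simp] arr_tgt [simp] tobj_obj [simp] uobj_obj [simp] tmor_idm [simp]
  lun_iso [simp] run_iso [simp] assc_iso [simp]

lemma idm_arr [simp]: "a \<in> obj C \<Longrightarrow> idm C a \<in> arr C"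
  and src_idm [simp]: "a \<in> obj C \<Longrightarrow> src C (idm C a) = a"
  and tgt_idm [simp]: "a \<in> obj C \<Longrightarrow> tgt C (idm C a) = a"
  using idm_hom[of a] by (auto simp: hom_iff)

lemma cmp_arr [simp]: "f \<in> arr C \<Longrightarrow> g \<in> arr C \<Longrightarrow> src C g = tgt C f \<Longrightarrow> cmp C g f \<in> arr C"
  and src_cmp [simp]: "f \<in> arr C \<Longrightarrow> g \<in> arr C \<Longrightarrow> src C g = tgt C f \<Longrightarrow> src C (cmp C g f) = src C f"
  and tgt_cmp [simp]: "f \<in> arr C \<Longrightarrow> g \<in> arr C \<Longrightarrow> src C g = tgt C f \<Longrightarrow> tgt C (cmp C g f) = tgt C g"
  using cmp_hom[OF arr_in_hom[of f], of g "tgt C g"] by (auto simp: hom_iff)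

lemma tmor_arr [simp]: "f \<in> arr C \<Longrightarrow> g \<in> arr C \<Longrightarrow> tmor C f g \<in> arr C"
  and src_tmor [simp]: "f \<in> arr C \<Longrightarrow> g \<in> arr C \<Longrightarrow> src C (tmor C f g) = tobj C (src C f) (src C g)"
  and tgt_tmor [simp]: "f \<in> arr C \<Longrightarrow> g \<in> arr C \<Longrightarrow> tgt C (tmor C f g) = tobj C (tgt C f) (tgt C g)"
  using tmor_hom[OF arr_in_hom[of f] arr_in_hom[of g]] by (auto simp: hom_iff)

lemma lun_arr [simp]: "a \<in> obj C \<Longrightarrow> lun C a \<in> arr C"
  and src_lun [simp]: "a \<in> obj C \<Longrightarrow> src C (lun C a) = tobj C (uobj C) a"
  and tgt_lun [simp]: "a \<in> obj C \<Longrightarrow> tgt C (lun C a) = a"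
  using lun_hom[of a] by (auto simp: hom_iff)

lemma run_arr [simp]: "a \<in> obj C \<Longrightarrow> run C a \<in> arr C"
  and src_run [simp]: "a \<in> obj C \<Longrightarrow> src C (run C a) = tobj C a (uobj C)"
  and tgt_run [simp]: "a \<in> obj C \<Longrightarrow> tgt C (run C a) = a"
  using run_hom[of a] by (auto simp: hom_iff)

lemma brd_arr [simp]: "a \<in> obj C \<Longrightarrow> b \<in> obj C \<Longrightarrow> brd C a b \<in> arr C"
  and src_brd [simp]: "a \<in> obj C \<Longrightarrow> b \<in> obj C \<Longrightarrow> src C (brd C a b) = tobj C a b"
  and tgt_brd [simp]: "a \<in> obj C \<Longrightarrow> b \<in> obj C \<Longrightarrow> tgt C (brd C a b) = tobj C b a"
  using brd_hom[of a b] by (auto simp: hom_iff)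

lemma assc_arr [simp]: "a \<in> obj C \<Longrightarrow> b \<in> obj C \<Longrightarrow> c \<in> obj C \<Longrightarrow> assc C a b c \<in> arr C"
  and src_assc [simp]: "a \<in> obj C \<Longrightarrow> b \<in> obj C \<Longrightarrow> c \<in> obj C \<Longrightarrow>
      src C (assc C a b c) = tobj C (tobj C a b) c"
  and tgt_assc [simp]: "a \<in> obj C \<Longrightarrow> b \<in> obj C \<Longrightarrow> c \<in> obj C \<Longrightarrow>
      tgt C (assc C a b c) = tobj C a (tobj C b c)"
  using assc_hom[of a b c] by (auto simp: hom_iff)

lemma cmp_assoc_arr:
  "f \<in> arr C \<Longrightarrow> g \<in> arr C \<Longrightarrow> h \<in> arr C \<Longrightarrow> src C g = tgt C f \<Longrightarrow> src C h = tgt C g \<Longrightarrow>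
   cmp C (cmp C h g) f = cmp C h (cmp C g f)"
  using cmp_assoc[OF arr_in_hom[of f], of g "tgt C g" h "tgt C h"] by (auto simp: hom_iff)

lemma cmp_idm_left [simp]: "f \<in> arr C \<Longrightarrow> tgt C f = b \<Longrightarrow> cmp C (idm C b) f = f"
  using idm_left[OF arr_in_hom[of f]] by auto

lemma cmp_idm_right [simp]: "f \<in> arr C \<Longrightarrow> src C f = a \<Longrightarrow> cmp C f (idm C a) = f"
  using idm_right[OF arr_in_hom[of f]] by auto

lemma tmor_cmp_arr:
  "f \<in> arr C \<Longrightarrow> f' \<in> arr C \<Longrightarrow> g \<in> arr C \<Longrightarrow> g' \<in> arr C \<Longrightarrow>
   src C f' = tgt C f \<Longrightarrow> src C g' = tgt C g \<Longrightarrow>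
   tmor C (cmp C f' f) (cmp C g' g) = cmp C (tmor C f' g') (tmor C f g)"
  using tmor_cmp[of f "src C f" "tgt C f" f' "tgt C f'" g "src C g" "tgt C g" g' "tgt C g'"]
  by (auto simp: hom_iff)

lemma cmp_madd_left_arr:
  "f \<in> arr C \<Longrightarrow> g \<in> arr C \<Longrightarrow> g' \<in> arr C \<Longrightarrow> src C g' = src C g \<Longrightarrow> tgt C g' = tgt C g \<Longrightarrow>
   src C g = tgt C f \<Longrightarrow> cmp C (madd C g g') f = madd C (cmp C g f) (cmp C g' f)"
  using cmp_madd_left[OF arr_in_hom[of f], of g "tgt C g" g'] by (simp add: hom_iff)

lemma cmp_madd_right_arr:
  "f \<in> arr C \<Longrightarrow> f' \<in> arr C \<Longrightarrow> g \<in> arr C \<Longrightarrow> src C f' = src C f \<Longrightarrow> tgt C f' = tgt C f \<Longrightarrow>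
   src C g = tgt C f \<Longrightarrow> cmp C g (madd C f f') = madd C (cmp C g f) (cmp C g f')"
  using cmp_madd_right[OF arr_in_hom[of f], of f' g "tgt C g"] by (simp add: hom_iff)

lemma madd_idem_imp_mzero: assumes x: "x \<in> hom C a b" and xx: "madd C x x = x"
  shows "x = mzero C a b"
proof -
  have "x = madd C x (madd C x (mneg C x))" using madd_zero[OF x] madd_neg[OF x] by simp
  also have "\<dots> = madd C x (mneg C x)" using madd_assoc[OF x x mneg_hom[OF x]] xx by simp
  also have "\<dots> = mzero C a b" using madd_neg[OF x] .
  finally show ?thesis .
qed

lemma lun_nat_arr: "f \<in> arr C \<Longrightarrow>
    cmp C (lun C (tgt C f)) (tmor C (idm C (uobj C)) f) = cmp C f (lun C (src C f))"
  using lun_nat[OF arr_in_hom[of f]] .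

lemma run_nat_arr: "f \<in> arr C \<Longrightarrow>
    cmp C (run C (tgt C f)) (tmor C f (idm C (uobj C))) = cmp C f (run C (src C f))"
  using run_nat[OF arr_in_hom[of f]] .

lemma brd_nat_arr: "f \<in> arr C \<Longrightarrow> g \<in> arr C \<Longrightarrow>
    cmp C (brd C (tgt C f) (tgt C g)) (tmor C f g) = cmp C (tmor C g f) (brd C (src C f) (src C g))"
  using brd_nat[OF arr_in_hom[of f] arr_in_hom[of g]] .

lemma assc_nat_arr: "f \<in> arr C \<Longrightarrow> g \<in> arr C \<Longrightarrow> h \<in> arr C \<Longrightarrow>
    cmp C (assc C (tgt C f) (tgt C g) (tgt C h)) (tmor C (tmor C f g) h)
      = cmp C (tmor C f (tmor C g h)) (assc C (src C f) (src C g) (src C h))"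
  using assc_nat[OF arr_in_hom[of f] arr_in_hom[of g] arr_in_hom[of h]] .

lemma iso_arr_imp_arr [simp]: "iso_arr C u \<Longrightarrow> u \<in> arr C"
  by (simp add: iso_arr_def)

lemma iso_arrI:
  "u \<in> arr C \<Longrightarrow> w \<in> arr C \<Longrightarrow> src C w = tgt C u \<Longrightarrow> tgt C w = src C u \<Longrightarrow>
   cmp C w u = idm C (src C u) \<Longrightarrow> cmp C u w = idm C (tgt C u) \<Longrightarrow> iso_arr C u"
  unfolding iso_arr_def hom_def by blast

lemma inv_arr_props:
  assumes "iso_arr C u"
  shows "inv_arr C u \<in> hom C (tgt C u) (src C u) \<and>
    cmp C (inv_arr C u) u = idm C (src C u) \<and> cmp C u (inv_arr C u) = idm C (tgt C u)"
proof -
  from assms obtain w where "w \<in> hom C (tgt C u) (src C u) \<and>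
      cmp C w u = idm C (src C u) \<and> cmp C u w = idm C (tgt C u)"
    unfolding iso_arr_def by blast
  then show ?thesis unfolding inv_arr_def by (rule someI)
qed

lemma inv_arr_arr [simp]: "iso_arr C u \<Longrightarrow> inv_arr C u \<in> arr C"
  and src_inv_arr [simp]: "iso_arr C u \<Longrightarrow> src C (inv_arr C u) = tgt C u"
  and tgt_inv_arr [simp]: "iso_arr C u \<Longrightarrow> tgt C (inv_arr C u) = src C u"
  and cmp_inv_arr_self [simp]: "iso_arr C u \<Longrightarrow> cmp C (inv_arr C u) u = idm C (src C u)"
  and cmp_self_inv_arr [simp]: "iso_arr C u \<Longrightarrow> cmp C u (inv_arr C u) = idm C (tgt C u)"
  using inv_arr_props by (auto simp: hom_iff)

lemma cmp_inv_arr_cmp [simp]: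
  "iso_arr C u \<Longrightarrow> f \<in> arr C \<Longrightarrow> tgt C f = src C u \<Longrightarrow> cmp C (inv_arr C u) (cmp C u f) = f"
  by (simp flip: cmp_assoc_arr)

lemma cmp_cmp_inv_arr [simp]:
  "iso_arr C u \<Longrightarrow> f \<in> arr C \<Longrightarrow> tgt C f = tgt C u \<Longrightarrow> cmp C u (cmp C (inv_arr C u) f) = f"
  by (simp flip: cmp_assoc_arr)

lemma iso_arr_inv [simp]: "iso_arr C u \<Longrightarrow> iso_arr C (inv_arr C u)"
  by (rule iso_arrI[of _ u]) simp_all

lemma iso_arr_idm [simp]: "a \<in> obj C \<Longrightarrow> iso_arr C (idm C a)"
  by (rule iso_arrI[of _ "idm C a"]) simp_all

lemma iso_arr_cmp [simp]:
  "iso_arr C u \<Longrightarrow> iso_arr C v \<Longrightarrow> src C v = tgt C u \<Longrightarrow> iso_arr C (cmp C v u)"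
  by (rule iso_arrI[of _ "cmp C (inv_arr C u) (inv_arr C v)"]) (simp_all add: cmp_assoc_arr)

lemma iso_arr_tmor [simp]: "iso_arr C u \<Longrightarrow> iso_arr C v \<Longrightarrow> iso_arr C (tmor C u v)"
  by (rule iso_arrI[of _ "tmor C (inv_arr C u) (inv_arr C v)"]) (simp_all flip: tmor_cmp_arr)

lemma iso_arr_brd [simp]: "a \<in> obj C \<Longrightarrow> b \<in> obj C \<Longrightarrow> iso_arr C (brd C a b)"
  by (rule iso_arrI[of _ "brd C b a"]) (simp_all add: brd_sym)

lemma iso_move_left: "iso_arr C v \<Longrightarrow> f \<in> arr C \<Longrightarrow> tgt C f = src C v \<Longrightarrow>
   cmp C v f = h \<Longrightarrow> f = cmp C (inv_arr C v) h"
  by (drule sym) simp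

lemma iso_move_right: "iso_arr C u \<Longrightarrow> f \<in> arr C \<Longrightarrow> src C f = tgt C u \<Longrightarrow>
   cmp C f u = h \<Longrightarrow> f = cmp C h (inv_arr C u)"
  by (drule sym) (simp add: cmp_assoc_arr)

lemma iso_cancel_left:
  assumes "iso_arr C v" "f \<in> arr C" "f' \<in> arr C" "tgt C f = src C v" "tgt C f' = src C v"
    and "cmp C v f = cmp C v f'"
  shows "f = f'"
  using assms iso_move_left by metis

lemma iso_cancel_right:
  assumes "iso_arr C u" "f \<in> arr C" "f' \<in> arr C" "src C f = tgt C u" "src C f' = tgt C u"
    and "cmp C f u = cmp C f' u"
  shows "f = f'"
  using assms iso_move_right by metis

lemma iso_square_flip:
  assumes u: "iso_arr C u" and v: "iso_arr C v" and X: "X \<in> arr C" and L: "L \<in> arr C"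
    and ty: "src C v = tgt C X" "src C L = tgt C u" "src C X = src C u"
    and sq: "cmp C v X = cmp C L u"
  shows "cmp C (inv_arr C v) L = cmp C X (inv_arr C u)"
proof -
  have "L = cmp C (cmp C v X) (inv_arr C u)" using iso_move_right[OF u L ty(2) sq[symmetric]] .
  then show ?thesis using u v X ty by (simp add: cmp_assoc_arr)
qed

lemma cmp_eq_extend: "cmp C A B = cmp C A' B' \<Longrightarrow>
  A \<in> arr C \<Longrightarrow> B \<in> arr C \<Longrightarrow> A' \<in> arr C \<Longrightarrow> B' \<in> arr C \<Longrightarrow> X \<in> arr C \<Longrightarrow>
  src C A = tgt C B \<Longrightarrow> src C A' = tgt C B' \<Longrightarrow> src C B = tgt C X \<Longrightarrow> src C B' = tgt C X \<Longrightarrow>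
  cmp C A (cmp C B X) = cmp C A' (cmp C B' X)"
  by (simp flip: cmp_assoc_arr)

lemma isomorphic_sym: "isomorphic C a b \<Longrightarrow> isomorphic C b a"
proof -
  assume "isomorphic C a b"
  then obtain u where "u \<in> hom C a b" "iso_arr C u" unfolding isomorphic_def by blast
  then have "inv_arr C u \<in> hom C b a" "iso_arr C (inv_arr C u)" by (auto simp: hom_iff)
  then show ?thesis unfolding isomorphic_def by blast
qed

lemma isomorphic_trans: "isomorphic C a b \<Longrightarrow> isomorphic C b c \<Longrightarrow> isomorphic C a c"
proof -
  assume "isomorphic C a b" "isomorphic C b c"
  then obtain u v where "u \<in> hom C a b" "iso_arr C u" "v \<in> hom C b c" "iso_arr C v"
    unfolding isomorphic_def by blast
  then have "cmp C v u \<in> hom C a c" "iso_arr C (cmp C v u)" by (auto simp: hom_iff)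
  then show ?thesis unfolding isomorphic_def by blast
qed

lemma iso_class_eq: "isomorphic C a b \<Longrightarrow> iso_class C a = iso_class C b"
  unfolding iso_class_def using isomorphic_sym isomorphic_trans by blast

lemma K0_eq_iso_class: "\<gamma> \<in> K0 C \<Longrightarrow> b \<in> \<gamma> \<Longrightarrow> \<gamma> = iso_class C b"
  unfolding K0_def iso_class_def using isomorphic_sym isomorphic_trans by blast

lemma K0_obj: "\<gamma> \<in> K0 C \<Longrightarrow> b \<in> \<gamma> \<Longrightarrow> b \<in> obj C"
  unfolding K0_def iso_class_def by blast

lemma bij_betw_cmp_iso:
  assumes v: "iso_arr C v" "src C v = b'" "tgt C v = b"
    and u: "iso_arr C u" "src C u = a" "tgt C u = a'"
  shows "bij_betw (\<lambda>h. cmp C v (cmp C h u)) (hom C a' b') (hom C a b)"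
proof (rule bij_betwI[where g = "\<lambda>h. cmp C (inv_arr C v) (cmp C h (inv_arr C u))"])
  show "(\<lambda>h. cmp C v (cmp C h u)) \<in> hom C a' b' \<rightarrow> hom C a b"
    and "(\<lambda>h. cmp C (inv_arr C v) (cmp C h (inv_arr C u))) \<in> hom C a b \<rightarrow> hom C a' b'"
    using u v unfolding hom_def by auto
qed (use u v in \<open>auto simp: hom_iff cmp_assoc_arr\<close>)

section \<open>Tensoring with an invertible object is fully faithful\<close>

abbreviation lwhisker :: "'o \<Rightarrow> 'm \<Rightarrow> 'm" where
  "lwhisker g f \<equiv> tmor C (idm C g) f"

lemma lwhisker_cmp: "g \<in> obj C \<Longrightarrow> h \<in> arr C \<Longrightarrow> k \<in> arr C \<Longrightarrow> src C k = tgt C h \<Longrightarrow>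
   lwhisker g (cmp C k h) = cmp C (lwhisker g k) (lwhisker g h)"
  using tmor_cmp_arr[of "idm C g" "idm C g" h k] by simp

lemma lwhisker_madd: "g \<in> obj C \<Longrightarrow> f \<in> hom C a b \<Longrightarrow> f' \<in> hom C a b \<Longrightarrow>
  lwhisker g (madd C f f') = madd C (lwhisker g f) (lwhisker g f')"
  using tmor_madd_right[OF idm_hom] .

lemma obj_right_inverse: "g \<in> obj C \<Longrightarrow> \<exists>g' \<in> obj C. \<exists>e. iso_arr C e \<and> e \<in> hom C (tobj C g g') (uobj C)"
  using invertible unfolding isomorphic_def by blast

lemma obj_left_inverse: "g \<in> obj C \<Longrightarrow> \<exists>g' \<in> obj C. \<exists>e. iso_arr C e \<and> e \<in> hom C (tobj C g' g) (uobj C)"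
proof -
  assume g: "g \<in> obj C"
  obtain b u where b: "b \<in> obj C" "u \<in> hom C (tobj C g b) (uobj C)" "iso_arr C u"
    using obj_right_inverse[OF g] by blast
  show ?thesis
    using b g by (intro bexI[of _ b] exI[of _ "cmp C u (brd C b g)"]) (auto simp: hom_iff)
qed

context
  fixes g g' e
  assumes g: "g \<in> obj C" and g': "g' \<in> obj C"
    and e: "iso_arr C e" "e \<in> hom C (tobj C g' g) (uobj C)"
begin

definition unwhisker_iso :: "'o \<Rightarrow> 'm" where
  "unwhisker_iso a = cmp C (lun C a) (cmp C (tmor C e (idm C a)) (inv_arr C (assc C g' g a)))"

lemma counit_arr: "e \<in> arr C" "src C e = tobj C g' g" "tgt C e = uobj C"
  using e by (auto simp: hom_iff)

lemma unwhisker_iso_arr [simp]: "a \<in> obj C \<Longrightarrow> unwhisker_iso a \<in> arr C"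
  and src_unwhisker_iso [simp]: "a \<in> obj C \<Longrightarrow> src C (unwhisker_iso a) = tobj C g' (tobj C g a)"
  and tgt_unwhisker_iso [simp]: "a \<in> obj C \<Longrightarrow> tgt C (unwhisker_iso a) = a"
  and iso_unwhisker_iso [simp]: "a \<in> obj C \<Longrightarrow> iso_arr C (unwhisker_iso a)"
  unfolding unwhisker_iso_def using g g' e counit_arr by auto

lemma unwhisker_iso_nat:
  assumes h: "h \<in> arr C"
  shows "cmp C (unwhisker_iso (tgt C h)) (lwhisker g' (lwhisker g h)) = cmp C h (unwhisker_iso (src C h))"
proof -
  let ?a = "src C h" and ?b = "tgt C h"
  have assc_sq: "cmp C (inv_arr C (assc C g' g ?b)) (lwhisker g' (lwhisker g h))
      = cmp C (tmor C (idm C (tobj C g' g)) h) (inv_arr C (assc C g' g ?a))"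
    by (rule iso_square_flip) (use assc_nat_arr[of "idm C g'" "idm C g" h] g g' h in simp_all)
  have e_sq: "cmp C (tmor C e (idm C ?b)) (tmor C (idm C (tobj C g' g)) h)
      = cmp C (lwhisker (uobj C) h) (tmor C e (idm C ?a))"
    using g g' counit_arr h by (simp flip: tmor_cmp_arr)
  have "cmp C (unwhisker_iso ?b) (lwhisker g' (lwhisker g h))
      = cmp C (lun C ?b) (cmp C (tmor C e (idm C ?b))
          (cmp C (inv_arr C (assc C g' g ?b)) (lwhisker g' (lwhisker g h))))"
    unfolding unwhisker_iso_def using g g' e counit_arr h by (simp add: cmp_assoc_arr)
  also have "\<dots> = cmp C (lun C ?b) (cmp C (tmor C e (idm C ?b))
      (cmp C (tmor C (idm C (tobj C g' g)) h) (inv_arr C (assc C g' g ?a))))"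
    unfolding assc_sq ..
  also have "\<dots> = cmp C (lun C ?b) (cmp C (lwhisker (uobj C) h)
      (cmp C (tmor C e (idm C ?a)) (inv_arr C (assc C g' g ?a))))"
    using g g' e counit_arr h by (subst cmp_eq_extend[OF e_sq]) auto
  also have "\<dots> = cmp C h (unwhisker_iso ?a)"
    unfolding unwhisker_iso_def using g g' e counit_arr h
    by (subst cmp_eq_extend[OF lun_nat_arr[OF h]]) auto
  finally show ?thesis .
qed

end

lemma lwhisker_faithful:
  assumes g: "g \<in> obj C" and h: "h \<in> arr C" "h' \<in> arr C" "src C h' = src C h" "tgt C h' = tgt C h"
    and eq: "lwhisker g h = lwhisker g h'"
  shows "h = h'"
proof -
  obtain g' e where g': "g' \<in> obj C" and e: "iso_arr C e" "e \<in> hom C (tobj C g' g) (uobj C)"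
    using obj_left_inverse[OF g] by blast
  let ?u = "unwhisker_iso g g' e (src C h)"
  have u: "iso_arr C ?u" "tgt C ?u = src C h" using g g' e h by simp_all
  have "cmp C h ?u = cmp C h' ?u"
    using unwhisker_iso_nat[OF g g' e h(1)] unwhisker_iso_nat[OF g g' e h(2)] eq h(3,4) by simp
  then show ?thesis using iso_cancel_right[OF u(1) h(1,2)] u(2) h(3) by metis
qed

lemma lwhisker_full:
  assumes g: "g \<in> obj C" and a: "a \<in> obj C" "b \<in> obj C"
    and k: "k \<in> hom C (tobj C g a) (tobj C g b)"
  shows "\<exists>h \<in> hom C a b. lwhisker g h = k"
proof -
  obtain g' e where g': "g' \<in> obj C" and e: "iso_arr C e" "e \<in> hom C (tobj C g' g) (uobj C)"
    using obj_left_inverse[OF g] by blast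
  let ?u = "unwhisker_iso g g' e"
  have k': "k \<in> arr C" "src C k = tobj C g a" "tgt C k = tobj C g b" using k by (auto simp: hom_iff)
  define h where "h = cmp C (?u b) (cmp C (lwhisker g' k) (inv_arr C (?u a)))"
  note e' = counit_arr[OF g g' e]
  have h: "h \<in> hom C a b" unfolding h_def hom_iff using g g' e e' a k' by simp
  then have h': "h \<in> arr C" "src C h = a" "tgt C h = b" by (auto simp: hom_iff)
  have "cmp C (?u b) (lwhisker g' (lwhisker g h)) = cmp C h (?u a)"
    using unwhisker_iso_nat[OF g g' e h'(1)] h' by simp
  also have "\<dots> = cmp C (?u b) (lwhisker g' k)"
    unfolding h_def using g g' e e' a k' by (simp add: cmp_assoc_arr)
  finally have "lwhisker g' (lwhisker g h) = lwhisker g' k"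
    using iso_cancel_left[OF iso_unwhisker_iso[OF g g' e a(2)]] g g' e e' a k' h' by simp
  then have "lwhisker g h = k" using lwhisker_faithful[OF g', of "lwhisker g h" k] g k' h' by simp
  then show ?thesis using h by blast
qed

lemma lwhisker_bij:
  assumes g: "g \<in> obj C" and a: "a \<in> obj C" "b \<in> obj C"
  shows "bij_betw (lwhisker g) (hom C a b) (hom C (tobj C g a) (tobj C g b))"
proof (rule bij_betwI')
  fix x y assume "x \<in> hom C a b" "y \<in> hom C a b"
  then show "(lwhisker g x = lwhisker g y) = (x = y)"
    using lwhisker_faithful[OF g, of x y] by (auto simp: hom_iff)
next
  fix x assume "x \<in> hom C a b"
  then show "lwhisker g x \<in> hom C (tobj C g a) (tobj C g b)" using tmor_hom[OF idm_hom[OF g]] by blast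
next
  fix y assume "y \<in> hom C (tobj C g a) (tobj C g b)"
  then show "\<exists>x \<in> hom C a b. y = lwhisker g x" using lwhisker_full[OF g a] by metis
qed

lemma lwhisker_reflects_iso:
  assumes g: "g \<in> obj C" and h: "h \<in> arr C" and i: "iso_arr C (lwhisker g h)"
  shows "iso_arr C h"
proof -
  obtain w where w: "w \<in> hom C (tgt C h) (src C h)" "lwhisker g w = inv_arr C (lwhisker g h)"
    using lwhisker_full[OF g, of "tgt C h" "src C h" "inv_arr C (lwhisker g h)"] i g h
    by (auto simp: hom_iff)
  have w': "w \<in> arr C" "src C w = tgt C h" "tgt C w = src C h" using w by (auto simp: hom_iff)
  have "cmp C w h = idm C (src C h)"
    using lwhisker_faithful[OF g, of "cmp C w h" "idm C (src C h)"] w' g h i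
    by (simp add: lwhisker_cmp w(2))
  moreover have "cmp C h w = idm C (tgt C h)"
    using lwhisker_faithful[OF g, of "cmp C h w" "idm C (tgt C h)"] w' g h i
    by (simp add: lwhisker_cmp w(2))
  ultimately show ?thesis using iso_arrI[OF h w'(1)] w' by simp
qed

lemma tensor_iso_solvable:
  assumes a: "a \<in> obj C" and b: "b \<in> obj C"
  shows "\<exists>c \<in> obj C. \<exists>w. iso_arr C w \<and> w \<in> hom C (tobj C a c) b"
proof -
  obtain a' e where a': "a' \<in> obj C" and e: "iso_arr C e" "e \<in> hom C (tobj C a a') (uobj C)"
    using obj_right_inverse[OF a] by blast
  let ?w = "cmp C (lun C b) (cmp C (tmor C e (idm C b)) (inv_arr C (assc C a a' b)))"
  have "iso_arr C ?w \<and> ?w \<in> hom C (tobj C a (tobj C a' b)) b"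
    using a a' b e by (auto simp: hom_iff)
  then show ?thesis using a' b by (intro bexI[of _ "tobj C a' b"]) auto
qed

lemma isomorphic_tensor_cancel:
  assumes g: "g \<in> obj C" and a: "a \<in> obj C" "b \<in> obj C"
    and i: "isomorphic C (tobj C g a) (tobj C g b)"
  shows "isomorphic C a b"
proof -
  obtain w where w: "w \<in> hom C (tobj C g a) (tobj C g b)" "iso_arr C w"
    using i unfolding isomorphic_def by blast
  obtain h where h: "h \<in> hom C a b" "lwhisker g h = w" using lwhisker_full[OF g a w(1)] by blast
  have "iso_arr C h" using lwhisker_reflects_iso[OF g, of h] h w by (auto simp: hom_iff)
  then show ?thesis using h unfolding isomorphic_def by blast
qed

text \<open>Every endomorphism of an invertible object \<open>Y\<close> is \<open>Y \<otimes> e\<close> for an endomorphism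
  \<open>e\<close> of the unit, and \<open>Y \<otimes> e\<close> can be slid past any \<open>q : \<one> \<rightarrow> Y\<close> via the right unitor.\<close>

lemma endo_cmp_eq_cmp_unit_endo:
  assumes al: "al \<in> hom C Y Y" and q: "q \<in> hom C (uobj C) Y"
  shows "\<exists>e \<in> hom C (uobj C) (uobj C). cmp C al q = cmp C q e"
proof -
  have al': "al \<in> arr C" "src C al = Y" "tgt C al = Y"
    and q': "q \<in> arr C" "src C q = uobj C" "tgt C q = Y"
    using al q by (auto simp: hom_iff)
  have Y: "Y \<in> obj C" using q' by auto
  let ?\<rho> = "run C Y" and ?\<rho>1 = "run C (uobj C)" and ?q1 = "tmor C q (idm C (uobj C))"
  have "cmp C (inv_arr C ?\<rho>) (cmp C al ?\<rho>) \<in> hom C (tobj C Y (uobj C)) (tobj C Y (uobj C))"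
    using al' Y by (simp add: hom_iff)
  then obtain e0 where e0: "e0 \<in> hom C (uobj C) (uobj C)"
    and al_e0: "lwhisker Y e0 = cmp C (inv_arr C ?\<rho>) (cmp C al ?\<rho>)"
    using lwhisker_full[OF Y uobj_obj uobj_obj] by blast
  have e0': "e0 \<in> arr C" "src C e0 = uobj C" "tgt C e0 = uobj C" using e0 by (auto simp: hom_iff)
  have al_eq: "al = cmp C ?\<rho> (cmp C (lwhisker Y e0) (inv_arr C ?\<rho>))"
    unfolding al_e0 using al' Y by (simp add: cmp_assoc_arr)
  have \<rho>_q: "cmp C (inv_arr C ?\<rho>) q = cmp C ?q1 (inv_arr C ?\<rho>1)"
    by (rule iso_square_flip) (use run_nat_arr[OF q'(1)] q' Y in simp_all)
  have slide: "cmp C (lwhisker Y e0) ?q1 = cmp C ?q1 (lwhisker (uobj C) e0)"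
    using q' e0' Y by (simp flip: tmor_cmp_arr)
  have "cmp C al q = cmp C ?\<rho> (cmp C (lwhisker Y e0) (cmp C ?q1 (inv_arr C ?\<rho>1)))"
    unfolding al_eq \<rho>_q[symmetric] using q' e0' Y by (simp add: cmp_assoc_arr)
  also have "\<dots> = cmp C ?\<rho> (cmp C ?q1 (cmp C (lwhisker (uobj C) e0) (inv_arr C ?\<rho>1)))"
    using q' e0' Y by (subst cmp_eq_extend[OF slide]) auto
  also have "\<dots> = cmp C q (cmp C ?\<rho>1 (cmp C (lwhisker (uobj C) e0) (inv_arr C ?\<rho>1)))"
    using q' e0' Y by (subst cmp_eq_extend[OF run_nat_arr[OF q'(1), unfolded q'(2,3)]]) auto
  finally have "cmp C al q = cmp C q (cmp C ?\<rho>1 (cmp C (lwhisker (uobj C) e0) (inv_arr C ?\<rho>1)))" .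
  moreover have "cmp C ?\<rho>1 (cmp C (lwhisker (uobj C) e0) (inv_arr C ?\<rho>1)) \<in> hom C (uobj C) (uobj C)"
    using e0' by (simp add: hom_iff)
  ultimately show ?thesis by blast
qed

lemma translateI:
  "g \<in> obj C \<Longrightarrow> r \<in> arr C \<Longrightarrow> iso_arr C u \<Longrightarrow> iso_arr C v \<Longrightarrow>
   tgt C u = tobj C g (src C r) \<Longrightarrow> src C v = tobj C g (tgt C r) \<Longrightarrow>
   translate C (cmp C v (cmp C (lwhisker g r) u)) r"
  unfolding translate_def hom_def by (intro bexI[of _ g] exI[of _ u] exI[of _ v]) simp

lemma translateE:
  assumes "translate C t r"
  obtains g u v where "g \<in> obj C" "iso_arr C u" "iso_arr C v"
    "tgt C u = tobj C g (src C r)" "src C v = tobj C g (tgt C r)" "src C u = src C t" "tgt C v = tgt C t"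
    "t = cmp C v (cmp C (lwhisker g r) u)"
  using assms unfolding translate_def hom_def by blast

lemma translate_refl:
  assumes f: "f \<in> arr C"
  shows "translate C f f"
proof -
  have "f = cmp C (cmp C (lun C (tgt C f)) (lwhisker (uobj C) f)) (inv_arr C (lun C (src C f)))"
    using iso_move_right[OF lun_iso[of "src C f"] f _ lun_nat_arr[OF f, symmetric]] f by simp
  also have "\<dots> = cmp C (lun C (tgt C f)) (cmp C (lwhisker (uobj C) f) (inv_arr C (lun C (src C f))))"
    using f by (simp add: cmp_assoc_arr)
  also have "translate C \<dots> f"
    using f by (intro translateI) auto
  finally show ?thesis .
qed

lemma translate_cmp_iso:
  assumes t: "translate C t r" and r: "r \<in> arr C" and w: "iso_arr C w" "iso_arr C w'"
    and ty: "src C w = tgt C t" "tgt C w' = src C t"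
  shows "translate C (cmp C w (cmp C t w')) r"
proof -
  obtain g u v where g: "g \<in> obj C" "iso_arr C u" "iso_arr C v" "tgt C u = tobj C g (src C r)"
    "src C v = tobj C g (tgt C r)" "src C u = src C t" "tgt C v = tgt C t"
    and t_eq: "t = cmp C v (cmp C (lwhisker g r) u)"
    using translateE[OF t] by blast
  have "cmp C w (cmp C t w') = cmp C (cmp C w v) (cmp C (lwhisker g r) (cmp C u w'))"
    unfolding t_eq using g r w ty by (simp add: cmp_assoc_arr)
  also have "translate C \<dots> r"
    using g r w ty by (intro translateI) auto
  finally show ?thesis .
qed

lemma translate_lwhisker: "g \<in> obj C \<Longrightarrow> f \<in> arr C \<Longrightarrow> translate C (lwhisker g f) f"
  using translateI[of g f "idm C (tobj C g (src C f))" "idm C (tobj C g (tgt C f))"] by simp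

lemma translate_rwhisker:
  assumes g: "g \<in> obj C" and f: "f \<in> arr C"
  shows "translate C (tmor C f (idm C g)) f"
proof -
  have "cmp C (brd C (tgt C f) g) (tmor C f (idm C g)) = cmp C (lwhisker g f) (brd C (src C f) g)"
    using brd_nat_arr[OF f idm_arr[OF g]] g by simp
  then have "tmor C f (idm C g)
      = cmp C (inv_arr C (brd C (tgt C f) g)) (cmp C (lwhisker g f) (brd C (src C f) g))"
    using iso_move_left f g by simp
  also have "translate C \<dots> f"
    using f g by (intro translate_cmp_iso translate_lwhisker) auto
  finally show ?thesis .
qed

lemma lwhisker_lwhisker:
  assumes g: "g \<in> obj C" "g' \<in> obj C" and m: "m \<in> arr C"
  shows "lwhisker g (lwhisker g' m)
    = cmp C (assc C g g' (tgt C m)) (cmp C (lwhisker (tobj C g g') m) (inv_arr C (assc C g g' (src C m))))"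
proof -
  have "cmp C (lwhisker g (lwhisker g' m)) (assc C g g' (src C m))
      = cmp C (assc C g g' (tgt C m)) (lwhisker (tobj C g g') m)"
    using assc_nat_arr[of "idm C g" "idm C g'" m] g m by simp
  from iso_move_right[OF _ _ _ this] show ?thesis using g m by (simp add: cmp_assoc_arr)
qed

lemma translate_trans:
  assumes t1: "translate C f k" and t2: "translate C k m" and m: "m \<in> arr C"
  shows "translate C f m"
proof -
  obtain g' u' v' where g': "g' \<in> obj C" "iso_arr C u'" "iso_arr C v'" "tgt C u' = tobj C g' (src C m)"
    "src C v' = tobj C g' (tgt C m)" "src C u' = src C k" "tgt C v' = tgt C k"
    and k_eq: "k = cmp C v' (cmp C (lwhisker g' m) u')"
    using translateE[OF t2] by blast
  obtain g u v where g: "g \<in> obj C" "iso_arr C u" "iso_arr C v" "tgt C u = tobj C g (src C k)"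
    "src C v = tobj C g (tgt C k)" "src C u = src C f" "tgt C v = tgt C f"
    and f_eq: "f = cmp C v (cmp C (lwhisker g k) u)"
    using translateE[OF t1] by blast
  have "lwhisker g k = cmp C (lwhisker g v') (cmp C (lwhisker g (lwhisker g' m)) (lwhisker g u'))"
    unfolding k_eq using g g' m by (simp add: lwhisker_cmp)
  then have "f = cmp C (cmp C v (cmp C (lwhisker g v') (assc C g g' (tgt C m))))
      (cmp C (lwhisker (tobj C g g') m) (cmp C (inv_arr C (assc C g g' (src C m))) (cmp C (lwhisker g u') u)))"
    unfolding f_eq lwhisker_lwhisker[OF g(1) g'(1) m] using g g' m by (simp add: cmp_assoc_arr)
  also have "translate C \<dots> m"
    using g g' m by (intro translateI) auto
  finally show ?thesis .
qed

lemma translate_sym: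
  assumes t: "translate C f k" and k: "k \<in> arr C"
  shows "translate C k f"
proof -
  obtain g u v where g: "g \<in> obj C" "iso_arr C u" "iso_arr C v" "tgt C u = tobj C g (src C k)"
    "src C v = tobj C g (tgt C k)" "src C u = src C f" "tgt C v = tgt C f"
    and f_eq: "f = cmp C v (cmp C (lwhisker g k) u)"
    using translateE[OF t] by blast
  have f: "f \<in> arr C" "src C f = src C u" "tgt C f = tgt C v" unfolding f_eq using g k by auto
  obtain g' e where g': "g' \<in> obj C" and e: "iso_arr C e" "e \<in> hom C (tobj C g' g) (uobj C)"
    using obj_left_inverse[OF g(1)] by blast
  let ?U = "unwhisker_iso g g' e"
  have U: "iso_arr C (?U a)" "src C (?U a) = tobj C g' (tobj C g a)" "tgt C (?U a) = a"
    if "a \<in> obj C" for a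
    using that g g' e by simp_all
  have gk: "lwhisker g k = cmp C (inv_arr C v) (cmp C f (inv_arr C u))"
    unfolding f_eq using g k by (simp add: cmp_assoc_arr)
  have "k = cmp C (cmp C (?U (tgt C k)) (lwhisker g' (lwhisker g k))) (inv_arr C (?U (src C k)))"
    using iso_move_right[OF U(1) k _ unwhisker_iso_nat[OF g(1) g' e k, symmetric]] U k by simp
  also have "\<dots> = cmp C (cmp C (?U (tgt C k)) (lwhisker g' (inv_arr C v)))
      (cmp C (lwhisker g' f) (cmp C (lwhisker g' (inv_arr C u)) (inv_arr C (?U (src C k)))))"
    unfolding gk using g g' U k f by (simp add: lwhisker_cmp cmp_assoc_arr)
  also have "translate C \<dots> f"
    using g g' U k f by (intro translateI) auto
  finally show ?thesis .
qed

lemma iso_cmp_if_lwhisker_eq_iso_cmp: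
  assumes g: "g \<in> obj C" and p: "p \<in> arr C" and q: "q \<in> arr C" "src C q = src C p"
    and W: "iso_arr C W" "W \<in> hom C (tobj C g (tgt C q)) (tobj C g (tgt C p))"
    and eq: "lwhisker g p = cmp C W (lwhisker g q)"
  shows "\<exists>a \<in> hom C (tgt C q) (tgt C p). iso_arr C a \<and> p = cmp C a q"
proof -
  obtain a where a: "a \<in> hom C (tgt C q) (tgt C p)" "lwhisker g a = W"
    using lwhisker_full[OF g _ _ W(2)] p q by auto
  have a': "a \<in> arr C" "src C a = tgt C q" "tgt C a = tgt C p" using a(1) by (auto simp: hom_iff)
  have "iso_arr C a" using lwhisker_reflects_iso[OF g a'(1)] a(2) W(1) by simp
  moreover have "p = cmp C a q"
    using lwhisker_faithful[OF g p, of "cmp C a q"] eq a' q g by (simp add: lwhisker_cmp a(2))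
  ultimately show ?thesis using a(1) by blast
qed

lemma translates_from_unit_iso_cmp:
  assumes tp: "translate C t p" and tq: "translate C t q"
    and p: "p \<in> arr C" "src C p = uobj C" and q: "q \<in> arr C" "src C q = uobj C"
  shows "\<exists>a \<in> hom C (tgt C q) (tgt C p). iso_arr C a \<and> p = cmp C a q"
proof -
  obtain g u v where g: "g \<in> obj C" "iso_arr C u" "iso_arr C v" "tgt C u = tobj C g (src C p)"
    "src C v = tobj C g (tgt C p)" "src C u = src C t" "tgt C v = tgt C t"
    and t_p: "t = cmp C v (cmp C (lwhisker g p) u)"
    using translateE[OF tp] by blast
  obtain g' u' v' where g': "g' \<in> obj C" "iso_arr C u'" "iso_arr C v'" "tgt C u' = tobj C g' (src C q)"
    "src C v' = tobj C g' (tgt C q)" "src C u' = src C t" "tgt C v' = tgt C t"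
    and t_q: "t = cmp C v' (cmp C (lwhisker g' q) u')"
    using translateE[OF tq] by blast
  \<comment> \<open>an isomorphism \<open>g \<cong> g'\<close> whose tensor with \<open>\<one>\<close> is \<open>u' \<circ> u\<inverse>\<close>\<close>
  define s where "s = cmp C (run C g') (cmp C u' (cmp C (inv_arr C u) (inv_arr C (run C g))))"
  have s: "s \<in> arr C" "src C s = g" "tgt C s = g'" "iso_arr C s"
    unfolding s_def using g g' p q by auto
  have s_unit: "tmor C s (idm C (uobj C)) = cmp C u' (inv_arr C u)"
  proof -
    have "cmp C (run C g') (tmor C s (idm C (uobj C))) = cmp C s (run C g)"
      using run_nat_arr[OF s(1)] s by simp
    then have "tmor C s (idm C (uobj C)) = cmp C (inv_arr C (run C g')) (cmp C s (run C g))"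
      using iso_move_left[OF run_iso[OF g'(1)]] s g g' by simp
    also have "\<dots> = cmp C u' (inv_arr C u)" unfolding s_def using g g' p q by (simp add: cmp_assoc_arr)
    finally show ?thesis .
  qed
  have slide: "cmp C (lwhisker g' q) (tmor C s (idm C (uobj C))) = cmp C (tmor C s (idm C (tgt C q))) (lwhisker g q)"
    using s q g g' by (simp flip: tmor_cmp_arr)
  define W where "W = cmp C (inv_arr C v) (cmp C v' (tmor C s (idm C (tgt C q))))"
  have W: "iso_arr C W" "W \<in> hom C (tobj C g (tgt C q)) (tobj C g (tgt C p))"
    unfolding W_def hom_iff using s g g' q p by auto
  have "lwhisker g p = cmp C (inv_arr C v) (cmp C t (inv_arr C u))"
    unfolding t_p using g p by (simp add: cmp_assoc_arr)
  also have "\<dots> = cmp C (inv_arr C v) (cmp C v' (cmp C (lwhisker g' q) (tmor C s (idm C (uobj C)))))"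
    unfolding t_q s_unit using g g' q by (simp add: cmp_assoc_arr)
  also have "\<dots> = cmp C W (lwhisker g q)"
    unfolding slide W_def using s q g g' by (simp add: cmp_assoc_arr)
  finally show ?thesis using iso_cmp_if_lwhisker_eq_iso_cmp[OF g(1) p(1) q(1) _ W] p(2) q(2) by simp
qed

lemma
  assumes "hideal_2r C I"
  shows hideal_2r_arr: "f \<in> I \<Longrightarrow> f \<in> arr C"
    and hideal_2r_mzero: "a \<in> obj C \<Longrightarrow> b \<in> obj C \<Longrightarrow> mzero C a b \<in> I"
    and hideal_2r_madd: "f \<in> I \<Longrightarrow> g \<in> I \<Longrightarrow> f \<in> hom C a b \<Longrightarrow> g \<in> hom C a b \<Longrightarrow> madd C f g \<in> I"
    and hideal_2r_mneg: "f \<in> I \<Longrightarrow> mneg C f \<in> I"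
    and hideal_2r_cmp_left: "f \<in> I \<Longrightarrow> g \<in> arr C \<Longrightarrow> src C g = tgt C f \<Longrightarrow> cmp C g f \<in> I"
    and hideal_2r_cmp_right: "f \<in> I \<Longrightarrow> h \<in> arr C \<Longrightarrow> tgt C h = src C f \<Longrightarrow> cmp C f h \<in> I"
    and hideal_2r_lwhisker: "f \<in> I \<Longrightarrow> a \<in> obj C \<Longrightarrow> lwhisker a f \<in> I"
    and hideal_2r_rwhisker: "f \<in> I \<Longrightarrow> a \<in> obj C \<Longrightarrow> tmor C f (idm C a) \<in> I"
  using assms unfolding hideal_2r_def by blast+

lemma hideal_2rI:
  assumes "I \<subseteq> arr C" and "\<And>a b. a \<in> obj C \<Longrightarrow> b \<in> obj C \<Longrightarrow> mzero C a b \<in> I"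
    and "\<And>a b f g. f \<in> I \<Longrightarrow> g \<in> I \<Longrightarrow> f \<in> hom C a b \<Longrightarrow> g \<in> hom C a b \<Longrightarrow> madd C f g \<in> I"
    and "\<And>f. f \<in> I \<Longrightarrow> mneg C f \<in> I"
    and "\<And>f g. f \<in> I \<Longrightarrow> g \<in> arr C \<Longrightarrow> src C g = tgt C f \<Longrightarrow> cmp C g f \<in> I"
    and "\<And>f h. f \<in> I \<Longrightarrow> h \<in> arr C \<Longrightarrow> tgt C h = src C f \<Longrightarrow> cmp C f h \<in> I"
    and "\<And>f a. f \<in> I \<Longrightarrow> a \<in> obj C \<Longrightarrow> lwhisker a f \<in> I"
    and "\<And>f a. f \<in> I \<Longrightarrow> a \<in> obj C \<Longrightarrow> tmor C f (idm C a) \<in> I"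
  shows "hideal_2r C I"
  unfolding hideal_2r_def using assms by (intro conjI allI ballI impI) auto

lemma hideal_2r_all_arr: "hideal_2r C (arr C)"
proof (rule hideal_2rI)
  show "mzero C a b \<in> arr C" if "a \<in> obj C" "b \<in> obj C" for a b
    using mzero_hom[OF that] by (simp add: hom_iff)
  show "madd C f g \<in> arr C" if "f \<in> hom C a b" "g \<in> hom C a b" for a b f g
    using madd_hom[OF that] by (simp add: hom_iff)
  show "mneg C f \<in> arr C" if "f \<in> arr C" for f
    using mneg_hom[OF arr_in_hom[OF that]] by (simp add: hom_iff)
qed simp_all

lemma hideal_2r_Inter:
  assumes "F \<noteq> {}" and "\<And>K. K \<in> F \<Longrightarrow> hideal_2r C K"
  shows "hideal_2r C (\<Inter>F)"
proof (rule hideal_2rI)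
  note I = assms(2)
  show "\<Inter>F \<subseteq> arr C" using assms hideal_2r_arr by blast
  show "mzero C a b \<in> \<Inter>F" if "a \<in> obj C" "b \<in> obj C" for a b
    using hideal_2r_mzero[OF I that] by blast
  show "madd C f g \<in> \<Inter>F" if "f \<in> \<Inter>F" "g \<in> \<Inter>F" "f \<in> hom C a b" "g \<in> hom C a b" for a b f g
    using that hideal_2r_madd[OF I] by blast
  show "mneg C f \<in> \<Inter>F" if "f \<in> \<Inter>F" for f
    using that hideal_2r_mneg[OF I] by blast
  show "cmp C g f \<in> \<Inter>F" if "f \<in> \<Inter>F" "g \<in> arr C" "src C g = tgt C f" for f g
    using that hideal_2r_cmp_left[OF I] by blast
  show "cmp C f g \<in> \<Inter>F" if "f \<in> \<Inter>F" "g \<in> arr C" "tgt C g = src C f" for f g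
    using that hideal_2r_cmp_right[OF I] by blast
  show "lwhisker a f \<in> \<Inter>F" if "f \<in> \<Inter>F" "a \<in> obj C" for f a
    using that hideal_2r_lwhisker[OF I] by blast
  show "tmor C f (idm C a) \<in> \<Inter>F" if "f \<in> \<Inter>F" "a \<in> obj C" for f a
    using that hideal_2r_rwhisker[OF I] by blast
qed

lemma hideal_2r_translate:
  assumes I: "hideal_2r C I" and f: "f \<in> I" and t: "translate C f' f"
  shows "f' \<in> I"
proof -
  obtain g u v where g: "g \<in> obj C" "iso_arr C u" "iso_arr C v" "tgt C u = tobj C g (src C f)"
    "src C v = tobj C g (tgt C f)" and f': "f' = cmp C v (cmp C (lwhisker g f) u)"
    using translateE[OF t] by blast
  have fa: "f \<in> arr C" using hideal_2r_arr[OF I f] .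
  have "cmp C (lwhisker g f) u \<in> I"
    using hideal_2r_cmp_right[OF I hideal_2r_lwhisker[OF I f g(1)]] g fa by simp
  then show ?thesis
    unfolding f' using hideal_2r_cmp_left[OF I] g fa by simp
qed

lemma hideal_2r_translate_sym:
  "hideal_2r C I \<Longrightarrow> f \<in> I \<Longrightarrow> translate C f f' \<Longrightarrow> f' \<in> arr C \<Longrightarrow> f' \<in> I"
  using hideal_2r_translate translate_sym by blast

end

section \<open>Homogeneous decomposition in a graded ring\<close>

lemma add_subgroupD:
  "add_subgroup A \<Longrightarrow> 0 \<in> A"
  "add_subgroup A \<Longrightarrow> a \<in> A \<Longrightarrow> b \<in> A \<Longrightarrow> a + b \<in> A"
  "add_subgroup A \<Longrightarrow> a \<in> A \<Longrightarrow> - a \<in> A"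
  unfolding add_subgroup_def by blast+

lemma add_subgroup_sum:
  assumes "add_subgroup G" and "finite A" and "\<And>a. a \<in> A \<Longrightarrow> f a \<in> G"
  shows "sum f A \<in> G"
  using assms(2,3) by (induction A rule: finite_induct) (simp_all add: add_subgroupD[OF assms(1)])

context graded_comm_ring
begin

lemma zero_Rx [simp]: "0 \<in> Rx x"
  using add_subgroupD(1)[OF Rx_subgroup] .

lemma add_Rx: "a \<in> Rx x \<Longrightarrow> b \<in> Rx x \<Longrightarrow> a + b \<in> Rx x"
  using add_subgroupD(2)[OF Rx_subgroup] .

lemma neg_Rx: "a \<in> Rx x \<Longrightarrow> - a \<in> Rx x"
  using add_subgroupD(3)[OF Rx_subgroup] .

lemma hdecomp_hcomp: "hdecomp Rx r (\<lambda>y. hcomp Rx y r)"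
  unfolding hcomp_def using theI'[OF direct_sum] by simp

lemma hcomp_eq: "hdecomp Rx r f \<Longrightarrow> hcomp Rx y r = f y"
  unfolding hcomp_def using the1_equality[OF direct_sum] by simp

lemma hcomp_Rx: "hcomp Rx y r \<in> Rx y"
  and finite_hcomp_support: "finite {y. hcomp Rx y r \<noteq> 0}"
  and sum_hcomp: "r = (\<Sum>y \<in> {y. hcomp Rx y r \<noteq> 0}. hcomp Rx y r)"
  using hdecomp_hcomp unfolding hdecomp_def by blast+

lemma hdecompI:
  assumes "\<And>y. f y \<in> Rx y" "finite A" "{y. f y \<noteq> 0} \<subseteq> A" "r = sum f A"
  shows "hdecomp Rx r f"
proof -
  have "sum f A = sum f {y. f y \<noteq> 0}"
    using assms(2,3) by (intro sum.mono_neutral_right) auto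
  then show ?thesis unfolding hdecomp_def using assms finite_subset by metis
qed

lemma sum_hcomp_superset:
  "finite A \<Longrightarrow> {y. hcomp Rx y r \<noteq> 0} \<subseteq> A \<Longrightarrow> r = (\<Sum>y \<in> A. hcomp Rx y r)"
proof -
  assume "finite A" "{y. hcomp Rx y r \<noteq> 0} \<subseteq> A"
  then have "(\<Sum>y \<in> {y. hcomp Rx y r \<noteq> 0}. hcomp Rx y r) = (\<Sum>y \<in> A. hcomp Rx y r)"
    by (intro sum.mono_neutral_left) auto
  then show ?thesis using sum_hcomp[of r] by simp
qed

lemma hcomp_homog: "r \<in> Rx x \<Longrightarrow> hcomp Rx y r = (if y = x then r else 0)"
  by (rule hcomp_eq, rule hdecompI[where A = "{x}"]) auto

lemma Rx_disjoint: "r \<in> Rx x \<Longrightarrow> r \<in> Rx y \<Longrightarrow> x \<noteq> y \<Longrightarrow> r = 0"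
  using hcomp_homog[of r x y] hcomp_homog[of r y y] by simp

lemma hcomp_add: "hcomp Rx y (r + s) = hcomp Rx y r + hcomp Rx y s"
proof -
  let ?A = "{y. hcomp Rx y r \<noteq> 0} \<union> {y. hcomp Rx y s \<noteq> 0}"
  have "finite ?A" using finite_hcomp_support by blast
  then have "hdecomp Rx (r + s) (\<lambda>y. hcomp Rx y r + hcomp Rx y s)"
    using sum_hcomp_superset[of ?A r] sum_hcomp_superset[of ?A s]
    by (intro hdecompI[where A = ?A]) (auto simp: add_Rx hcomp_Rx sum.distrib)
  then show ?thesis using hcomp_eq by simp
qed

lemma hcomp_neg: "hcomp Rx y (- r) = - hcomp Rx y r"
proof -
  have "hdecomp Rx (- r) (\<lambda>y. - hcomp Rx y r)"
    using sum_hcomp[of r] finite_hcomp_support[of r]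
    by (intro hdecompI[where A = "{y. hcomp Rx y r \<noteq> 0}"]) (auto simp: neg_Rx hcomp_Rx sum_negf)
  then show ?thesis using hcomp_eq by simp
qed

lemma mem_if_hcomp_mem: "add_subgroup G \<Longrightarrow> (\<And>y. hcomp Rx y r \<in> G) \<Longrightarrow> r \<in> G"
  using add_subgroup_sum[OF _ finite_hcomp_support] sum_hcomp[of r] by metis

lemma mult_mem_if_hcomp_mult_mem:
  assumes G: "add_subgroup G"
    and hcomp_mult: "\<And>y. hcomp Rx y a * h \<in> G" "\<And>y. h * hcomp Rx y a \<in> G"
  shows "a * h \<in> G" and "h * a \<in> G"
proof -
  have "a * h = (\<Sum>y \<in> {y. hcomp Rx y a \<noteq> 0}. hcomp Rx y a * h)"
    using sum_hcomp[of a] by (metis sum_distrib_right)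
  then show "a * h \<in> G" using add_subgroup_sum[OF G finite_hcomp_support] hcomp_mult(1) by metis
  have "h * a = (\<Sum>y \<in> {y. hcomp Rx y a \<noteq> 0}. h * hcomp Rx y a)"
    using sum_hcomp[of a] by (metis sum_distrib_left)
  then show "h * a \<in> G" using add_subgroup_sum[OF G finite_hcomp_support] hcomp_mult(2) by metis
qed

end

lemma hideal_gr_add_subgroup: "hideal_gr Rx J \<Longrightarrow> add_subgroup J"
  and hideal_gr_mult: "hideal_gr Rx J \<Longrightarrow> r \<in> J \<Longrightarrow> a * r \<in> J \<and> r * a \<in> J"
  and hideal_gr_hcomp: "hideal_gr Rx J \<Longrightarrow> r \<in> J \<Longrightarrow> hcomp Rx x r \<in> J"
  unfolding hideal_gr_def by blast+

lemma hideal_gr_Inter: "(\<And>J. J \<in> F \<Longrightarrow> hideal_gr Rx J) \<Longrightarrow> hideal_gr Rx (\<Inter>F)"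
  unfolding hideal_gr_def add_subgroup_def by blast

section \<open>Morphisms of a tightened 2-ring are translates of homogeneous elements\<close>

context tightening
begin

lemma gr_pi_obj [simp]: "gr (pi x) \<in> obj C"
  using gr_rep[OF pi_K0] K0_obj[OF pi_K0] by blast

lemma pi_eq_iso_class_gr: "pi x = iso_class C (gr (pi x))"
  using K0_eq_iso_class[OF pi_K0 gr_rep[OF pi_K0]] .

lemma phi_in_hom: "r \<in> Rx x \<Longrightarrow> phi x r \<in> hom C (uobj C) (gr (pi x))"
  using bij_betw_apply[OF phi_bij] .

lemma phi_arr [simp]: "r \<in> Rx x \<Longrightarrow> phi x r \<in> arr C"
  and src_phi [simp]: "r \<in> Rx x \<Longrightarrow> src C (phi x r) = uobj C"
  and tgt_phi [simp]: "r \<in> Rx x \<Longrightarrow> tgt C (phi x r) = gr (pi x)"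
  using phi_in_hom[of r x] by (auto simp: hom_iff)

lemma phi_inj: "r \<in> Rx x \<Longrightarrow> s \<in> Rx x \<Longrightarrow> phi x r = phi x s \<Longrightarrow> r = s"
  using bij_betw_imp_inj_on[OF phi_bij] unfolding inj_on_def by blast

lemma phi_surj: "f \<in> hom C (uobj C) (gr (pi x)) \<Longrightarrow> \<exists>r \<in> Rx x. phi x r = f"
  using bij_betw_imp_surj_on[OF phi_bij, of x] by (metis imageE)

lemma phi_zero: "phi x 0 = mzero C (uobj C) (gr (pi x))"
  using madd_idem_imp_mzero[OF phi_in_hom[OF zero_Rx]] phi_add[of 0 x 0] by simp

lemma pi_diff_eq_unit:
  assumes "pi x = pi y"
  shows "pi (y - x) = iso_class C (uobj C)"
proof -
  let ?a = "gr (pi (y - x))" and ?b = "gr (pi x)"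
  have "pi (y - x + x) = iso_class C (tobj C ?a ?b)"
    using pi_hom gr_rep[OF pi_K0] by blast
  moreover have "?b \<in> pi (y - x + x)" using assms gr_rep[OF pi_K0, of x] by simp
  ultimately have "isomorphic C (tobj C ?a ?b) ?b" by (simp add: iso_class_def)
  moreover have "isomorphic C (tobj C ?b ?a) (tobj C ?a ?b)"
  proof -
    have "brd C ?b ?a \<in> hom C (tobj C ?b ?a) (tobj C ?a ?b)" "iso_arr C (brd C ?b ?a)"
      using brd_hom by simp_all
    then show ?thesis unfolding isomorphic_def by blast
  qed
  moreover have "isomorphic C ?b (tobj C ?b (uobj C))"
  proof -
    have "run C ?b \<in> hom C (tobj C ?b (uobj C)) ?b" "iso_arr C (run C ?b)"
      using run_hom by simp_all
    then show ?thesis using isomorphic_sym unfolding isomorphic_def by blast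
  qed
  ultimately have "isomorphic C (tobj C ?b ?a) (tobj C ?b (uobj C))"
    using isomorphic_trans by blast
  then have "isomorphic C ?a (uobj C)" using isomorphic_tensor_cancel[of ?b] by simp
  then show ?thesis using pi_eq_iso_class_gr[of "y - x"] iso_class_eq by simp
qed

lemma gr_pi_zero [simp]: "gr (pi 0) = uobj C"
  using gr_unit pi_diff_eq_unit[of 0 0] by simp

definition param_arr :: "'o \<Rightarrow> 'm \<Rightarrow> 'g \<Rightarrow> 'r \<Rightarrow> 'm" where
  "param_arr a v x r = cmp C v (cmp C (lwhisker a (phi x r)) (inv_arr C (run C a)))"

lemma param_arr_arr [simp]:
  "a \<in> obj C \<Longrightarrow> iso_arr C v \<Longrightarrow> src C v = tobj C a (gr (pi x)) \<Longrightarrow> r \<in> Rx x \<Longrightarrow>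
   param_arr a v x r \<in> arr C"
  and src_param_arr [simp]:
  "a \<in> obj C \<Longrightarrow> iso_arr C v \<Longrightarrow> src C v = tobj C a (gr (pi x)) \<Longrightarrow> r \<in> Rx x \<Longrightarrow>
   src C (param_arr a v x r) = a"
  and tgt_param_arr [simp]:
  "a \<in> obj C \<Longrightarrow> iso_arr C v \<Longrightarrow> src C v = tobj C a (gr (pi x)) \<Longrightarrow> r \<in> Rx x \<Longrightarrow>
   tgt C (param_arr a v x r) = tgt C v"
  unfolding param_arr_def by simp_all

lemma translate_param_arr:
  "a \<in> obj C \<Longrightarrow> r \<in> Rx x \<Longrightarrow> iso_arr C v \<Longrightarrow> src C v = tobj C a (gr (pi x)) \<Longrightarrow>
   translate C (param_arr a v x r) (phi x r)"
  unfolding param_arr_def by (intro translateI) auto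

lemma param_arr_add:
  assumes a: "a \<in> obj C" and v: "iso_arr C v" "src C v = tobj C a (gr (pi x))"
    and r: "r \<in> Rx x" "s \<in> Rx x"
  shows "param_arr a v x (r + s) = madd C (param_arr a v x r) (param_arr a v x s)"
proof -
  have "lwhisker a (phi x (r + s)) = madd C (lwhisker a (phi x r)) (lwhisker a (phi x s))"
    using phi_add[OF r] lwhisker_madd[OF a phi_in_hom phi_in_hom] r by simp
  then show ?thesis
    unfolding param_arr_def using a r v
    by (simp add: cmp_madd_left_arr[symmetric] cmp_madd_right_arr[symmetric])
qed

lemma hom_param_arr_bij:
  assumes a: "a \<in> obj C" and b: "b \<in> obj C"
  shows "\<exists>x v. iso_arr C v \<and> src C v = tobj C a (gr (pi x)) \<and> tgt C v = b \<and>
    bij_betw (param_arr a v x) (Rx x) (hom C a b)"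
proof -
  obtain c w where c: "c \<in> obj C" and w: "iso_arr C w" "w \<in> hom C (tobj C a c) b"
    using tensor_iso_solvable[OF a b] by blast
  obtain x where x: "pi x = iso_class C c"
    using pi_surj c unfolding K0_def by (metis imageE image_eqI)
  have "isomorphic C c (gr (pi x))"
    using gr_rep[OF pi_K0, of x] x by (simp add: iso_class_def)
  then obtain w' where w': "w' \<in> hom C c (gr (pi x))" "iso_arr C w'" unfolding isomorphic_def by blast
  define v where "v = cmp C w (lwhisker a (inv_arr C w'))"
  have v: "iso_arr C v" "src C v = tobj C a (gr (pi x))" "tgt C v = b"
    unfolding v_def using a c w w' by (auto simp: hom_iff)
  have "bij_betw ((\<lambda>h. cmp C v (cmp C h (inv_arr C (run C a)))) \<circ> (lwhisker a \<circ> phi x))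
      (Rx x) (hom C a b)"
    using a v phi_bij lwhisker_bij[OF a uobj_obj gr_pi_obj]
      bij_betw_cmp_iso[OF v, of "inv_arr C (run C a)" a "tobj C a (uobj C)"]
    by (auto intro: bij_betw_trans)
  then have "bij_betw (param_arr a v x) (Rx x) (hom C a b)"
    by (simp add: comp_def param_arr_def[abs_def])
  then show ?thesis using v by blast
qed

lemma arr_translate_phi:
  assumes f: "f \<in> arr C"
  shows "\<exists>x r. r \<in> Rx x \<and> translate C f (phi x r)"
proof -
  obtain x v where v: "iso_arr C v" "src C v = tobj C (src C f) (gr (pi x))" "tgt C v = tgt C f"
    and bij: "bij_betw (param_arr (src C f) v x) (Rx x) (hom C (src C f) (tgt C f))"
    using hom_param_arr_bij[of "src C f" "tgt C f"] f by auto
  obtain r where r: "r \<in> Rx x" "f = param_arr (src C f) v x r"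
    using bij_betw_imp_surj_on[OF bij] arr_in_hom[OF f] by (metis imageE)
  have "translate C (param_arr (src C f) v x r) (phi x r)"
    using translate_param_arr[OF _ r(1) v(1,2)] f by simp
  then show ?thesis using r(1) unfolding r(2)[symmetric] by blast
qed

lemma translate_param_arr_cmp_phi:
  assumes r: "r \<in> Rx x" and s: "s \<in> Rx y"
    and v: "iso_arr C v" "src C v = tobj C (gr (pi x)) (gr (pi y))"
  shows "translate C (cmp C (param_arr (gr (pi x)) v y s) (phi x r)) (phi (y + x) (s * r))"
proof -
  let ?p = "phi x r" and ?q = "phi y s" and ?gx = "gr (pi x)" and ?gy = "gr (pi y)" and ?u = "uobj C"
  have \<rho>: "cmp C (inv_arr C (run C ?gx)) ?p = cmp C (tmor C ?p (idm C ?u)) (inv_arr C (run C ?u))"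
    by (rule iso_square_flip) (use run_nat_arr[of ?p] r in simp_all)
  have tensor: "cmp C (lwhisker ?gx ?q) (tmor C ?p (idm C ?u)) = tmor C ?p ?q"
    using r s by (simp flip: tmor_cmp_arr)
  have "cmp C (brd C ?gx ?gy) (tmor C ?p ?q) = cmp C (tmor C ?q ?p) (brd C ?u ?u)"
    using brd_nat_arr[of ?p ?q] r s by simp
  then have \<beta>: "tmor C ?p ?q = cmp C (inv_arr C (brd C ?gx ?gy)) (cmp C (tmor C ?q ?p) (brd C ?u ?u))"
    using iso_move_left r s by simp
  have "cmp C (lun C ?gx) (lwhisker ?u ?p) = cmp C ?p (lun C ?u)"
    using lun_nat_arr[of ?p] r by simp
  then have "lwhisker ?u ?p = cmp C (inv_arr C (lun C ?gx)) (cmp C ?p (lun C ?u))"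
    using iso_move_left r by simp
  moreover have "tmor C ?q ?p = cmp C (tmor C ?q (idm C ?gx)) (lwhisker ?u ?p)"
    using r s by (simp flip: tmor_cmp_arr)
  ultimately have \<lambda>: "tmor C ?q ?p
      = cmp C (tmor C ?q (idm C ?gx)) (cmp C (inv_arr C (lun C ?gx)) (cmp C ?p (lun C ?u)))"
    by simp
  let ?T = "cmp C (tmor C ?q (idm C ?gx)) (cmp C (inv_arr C (lun C ?gx)) ?p)"
  have "cmp C (param_arr ?gx v y s) ?p
      = cmp C v (cmp C (lwhisker ?gx ?q) (cmp C (inv_arr C (run C ?gx)) ?p))"
    unfolding param_arr_def using v r s by (simp add: cmp_assoc_arr)
  also have "\<dots> = cmp C v (cmp C (tmor C ?p ?q) (inv_arr C (run C ?u)))"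
    unfolding \<rho> tensor[symmetric] using v r s by (simp add: cmp_assoc_arr)
  also have "\<dots> = cmp C (cmp C v (inv_arr C (brd C ?gx ?gy)))
      (cmp C ?T (cmp C (lun C ?u) (cmp C (brd C ?u ?u) (inv_arr C (run C ?u)))))"
    unfolding \<beta> \<lambda> using v r s by (simp add: cmp_assoc_arr)
  also have "translate C \<dots> (phi (y + x) (s * r))"
    using v r s Rx_mult[OF s r] by (intro translate_cmp_iso[OF phi_mult[OF s r]]) auto
  finally show ?thesis .
qed

lemma factor_through_lwhisker:
  assumes a: "a \<in> obj C" "X \<in> obj C" and v: "iso_arr C v" "v \<in> hom C (tobj C a X) b"
    and f: "f \<in> hom C b c"
  shows "\<exists>Z k w. k \<in> hom C X Z \<and> iso_arr C w \<and> w \<in> hom C (tobj C a Z) c \<and>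
    f = cmp C w (cmp C (lwhisker a k) (inv_arr C v))"
proof -
  have v': "v \<in> arr C" "src C v = tobj C a X" "tgt C v = b"
    and f': "f \<in> arr C" "src C f = b" "tgt C f = c"
    using v f by (auto simp: hom_iff)
  obtain Z w where Z: "Z \<in> obj C" and w: "iso_arr C w" "w \<in> hom C (tobj C a Z) c"
    using tensor_iso_solvable[OF a(1), of c] f' by auto
  have w': "w \<in> arr C" "src C w = tobj C a Z" "tgt C w = c" using w(2) by (auto simp: hom_iff)
  have "cmp C (inv_arr C w) (cmp C f v) \<in> hom C (tobj C a X) (tobj C a Z)"
    using w' w(1) v' f' by (simp add: hom_iff)
  then obtain k where k: "k \<in> hom C X Z" and ak: "lwhisker a k = cmp C (inv_arr C w) (cmp C f v)"
    using lwhisker_full[OF a Z] by metis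
  have "cmp C f v = cmp C w (lwhisker a k)"
    unfolding ak using w' w(1) v' f' by simp
  then have "f = cmp C (cmp C w (lwhisker a k)) (inv_arr C v)"
    using iso_move_right[OF v(1) f'(1)] v' f' by simp
  also have "\<dots> = cmp C w (cmp C (lwhisker a k) (inv_arr C v))"
    using k w' v' v(1) a by (simp add: hom_iff cmp_assoc_arr)
  finally show ?thesis using k w by blast
qed

lemma cmp_translate_phi_mult:
  assumes f: "f \<in> hom C a b" and g: "g \<in> hom C b c"
  shows "\<exists>x r y s. r \<in> Rx x \<and> s \<in> Rx y \<and> translate C f (phi x r) \<and> translate C g (phi y s)
     \<and> translate C (cmp C g f) (phi (y + x) (s * r))"
proof -
  have objs: "a \<in> obj C" "b \<in> obj C" "c \<in> obj C" using f g by (auto simp: hom_iff)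
  obtain x v where v: "iso_arr C v" "src C v = tobj C a (gr (pi x))" "tgt C v = b"
    and bij: "bij_betw (param_arr a v x) (Rx x) (hom C a b)"
    using hom_param_arr_bij[OF objs(1,2)] by blast
  obtain r where r: "r \<in> Rx x" and f_eq: "f = param_arr a v x r"
    using bij_betw_imp_surj_on[OF bij] f by (metis imageE)
  have "v \<in> hom C (tobj C a (gr (pi x))) b" using v by (simp add: hom_iff)
  then obtain Z k w where k: "k \<in> hom C (gr (pi x)) Z" and w: "iso_arr C w" "w \<in> hom C (tobj C a Z) c"
    and g_eq: "g = cmp C w (cmp C (lwhisker a k) (inv_arr C v))"
    using factor_through_lwhisker[OF objs(1) gr_pi_obj v(1) _ g] by blast
  have k': "k \<in> arr C" "src C k = gr (pi x)" "tgt C k = Z"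
    and w': "w \<in> arr C" "src C w = tobj C a Z" "tgt C w = c"
    using k w by (auto simp: hom_iff)
  have Z: "Z \<in> obj C" using arr_tgt[OF k'(1)] k'(3) by simp
  obtain y v' where v': "iso_arr C v'" "src C v' = tobj C (gr (pi x)) (gr (pi y))" "tgt C v' = Z"
    and bij': "bij_betw (param_arr (gr (pi x)) v' y) (Rx y) (hom C (gr (pi x)) Z)"
    using hom_param_arr_bij[OF gr_pi_obj[of x] Z] by blast
  obtain s where s: "s \<in> Rx y" and k_eq: "k = param_arr (gr (pi x)) v' y s"
    using bij_betw_imp_surj_on[OF bij'] k by (metis imageE)
  have "translate C g k"
    unfolding g_eq using objs k' w' w(1) v by (intro translateI) auto
  moreover have "translate C k (phi y s)"
    unfolding k_eq using translate_param_arr[OF gr_pi_obj s v'(1,2)] .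
  ultimately have tg: "translate C g (phi y s)" using translate_trans phi_arr[OF s] by blast
  have "cmp C g f = cmp C w (cmp C (lwhisker a (cmp C k (phi x r))) (inv_arr C (run C a)))"
    unfolding g_eq f_eq param_arr_def using objs k' w' v r by (simp add: cmp_assoc_arr lwhisker_cmp)
  also have "translate C \<dots> (cmp C k (phi x r))"
    using objs k' w' w(1) r by (intro translateI) auto
  finally have "translate C (cmp C g f) (phi (y + x) (s * r))"
    using translate_trans[OF _ translate_param_arr_cmp_phi[OF r s v'(1,2)] phi_arr[OF Rx_mult[OF s r]]]
    unfolding k_eq by blast
  moreover have "translate C f (phi x r)"
    unfolding f_eq using translate_param_arr[OF objs(1) r v(1,2)] .
  ultimately show ?thesis using r s tg by blast
qed

lemma translate_phi_same_degree:
  assumes r: "r \<in> Rx y" and s: "s \<in> Rx y" and t: "translate C (phi y s) (phi y r)"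
  shows "\<exists>c \<in> Rx 0. s = r * c"
proof -
  obtain b where b: "b \<in> hom C (gr (pi y)) (gr (pi y))" "phi y s = cmp C b (phi y r)"
    using translates_from_unit_iso_cmp[OF translate_refl t] r s by auto
  obtain e where e: "e \<in> hom C (uobj C) (uobj C)" "cmp C b (phi y r) = cmp C (phi y r) e"
    using endo_cmp_eq_cmp_unit_endo[OF b(1) phi_in_hom[OF r]] by blast
  obtain c where c: "c \<in> Rx 0" "phi 0 c = e" using phi_surj[of e 0] e(1) by auto
  have "phi y s = phi y (r * c)" using phi_mult_deg0[OF r c(1)] b(2) e(2) c(2) by simp
  then have "s = r * c" using phi_inj[OF s] Rx_mult[OF r c(1)] by simp
  then show ?thesis using c(1) by blast
qed

lemma pi_eq_if_translate_phi:
  assumes r: "r \<in> Rx x" and s: "s \<in> Rx y" and t: "translate C (phi y s) (phi x r)"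
  shows "pi x = pi y"
proof -
  have "isomorphic C (gr (pi x)) (gr (pi y))"
    using translates_from_unit_iso_cmp[OF translate_refl t] r s unfolding isomorphic_def by auto
  then show ?thesis using pi_eq_iso_class_gr iso_class_eq by metis
qed

text \<open>An isomorphism \<open>\<one> \<cong> g\<^bsub>y - x\<^esub>\<close> is \<open>\<phi> u\<close> for some \<open>u\<close>, and multiplying by \<open>u\<close> moves
  \<open>r\<close> to degree \<open>y\<close> without leaving its translation class.\<close>

lemma translate_phi_shift_degree:
  assumes e: "pi x = pi y" and r: "r \<in> Rx x"
  shows "\<exists>u \<in> Rx (y - x). translate C (phi y (u * r)) (phi x r)"
proof -
  have "gr (pi (y - x)) \<in> iso_class C (uobj C)"
    using gr_rep[OF pi_K0, of "y - x"] pi_diff_eq_unit[OF e] by simp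
  then obtain w where w: "w \<in> hom C (uobj C) (gr (pi (y - x)))" "iso_arr C w"
    unfolding iso_class_def isomorphic_def by blast
  obtain u where u: "u \<in> Rx (y - x)" "phi (y - x) u = w" using phi_surj[OF w(1)] by blast
  have w': "w \<in> arr C" "src C w = uobj C" "tgt C w = gr (pi (y - x))" using w(1) by (auto simp: hom_iff)
  let ?L = "cmp C (tmor C w (idm C (gr (pi x)))) (cmp C (inv_arr C (lun C (gr (pi x)))) (phi x r))"
  have L_ur: "translate C ?L (phi y (u * r))"
    using phi_mult[OF u(1) r] u(2) by simp
  have L_r: "translate C ?L (phi x r)"
  proof -
    have "translate C (cmp C (cmp C (tmor C w (idm C (gr (pi x)))) (inv_arr C (lun C (gr (pi x)))))
        (cmp C (phi x r) (idm C (uobj C)))) (phi x r)"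
      using r w' w(2) by (intro translate_cmp_iso translate_refl) auto
    then show ?thesis using r w' by (simp add: cmp_assoc_arr)
  qed
  have "u * r \<in> Rx y" using Rx_mult[OF u(1) r] by simp
  then have "translate C (phi y (u * r)) (phi x r)"
    using translate_trans[OF translate_sym[OF L_ur] L_r phi_arr[OF r]] by simp
  then show ?thesis using u(1) by blast
qed

lemma hideal_gr_translate_phi:
  assumes J: "hideal_gr Rx J" and r: "r \<in> Rx x" "r \<in> J" and s: "s \<in> Rx y"
    and t: "translate C (phi y s) (phi x r)"
  shows "s \<in> J"
proof -
  obtain u where u: "u \<in> Rx (y - x)" "translate C (phi y (u * r)) (phi x r)"
    using translate_phi_shift_degree[OF pi_eq_if_translate_phi[OF r(1) s t] r(1)] by blast
  have ur: "u * r \<in> Rx y" using Rx_mult[OF u(1) r(1)] by simp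
  have "translate C (phi y s) (phi y (u * r))"
    using translate_trans[OF t translate_sym[OF u(2) phi_arr[OF r(1)]]] ur by simp
  then obtain c where "s = u * r * c"
    using translate_phi_same_degree[OF ur s] by blast
  then show ?thesis using hideal_gr_mult[OF J] r(2) by metis
qed

end

section \<open>Restriction and extension of homogeneous ideals\<close>

definition homog_preim :: "('g \<Rightarrow> 'r::ring_1 set) \<Rightarrow> ('g \<Rightarrow> 'r \<Rightarrow> 'm) \<Rightarrow> 'm set \<Rightarrow> 'r set" where
  "homog_preim Rx phi I = {r. \<exists>x. r \<in> Rx x \<and> phi x r \<in> I}"

lemma add_subgroup_restr: "add_subgroup (restr Rx phi I)"
  unfolding restr_def add_subgroup_def by auto

lemma homog_preim_subset_restr: "homog_preim Rx phi I \<subseteq> restr Rx phi I"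
  unfolding restr_def homog_preim_def by auto

lemma restr_least: "add_subgroup A \<Longrightarrow> homog_preim Rx phi I \<subseteq> A \<Longrightarrow> restr Rx phi I \<subseteq> A"
  unfolding restr_def homog_preim_def by auto

lemma restr_mono: "I \<subseteq> J \<Longrightarrow> restr Rx phi I \<subseteq> restr Rx phi J"
  unfolding restr_def by blast

lemma extn_mono: "I \<subseteq> J \<Longrightarrow> extn C Rx phi I \<subseteq> extn C Rx phi J"
  unfolding extn_def by blast

context tightening
begin

lemma mem_homog_preim_iff:
  assumes I: "hideal_2r C I" and h: "h \<in> Rx y"
  shows "h \<in> homog_preim Rx phi I \<longleftrightarrow> phi y h \<in> I"
proof
  assume "h \<in> homog_preim Rx phi I"
  then obtain x where x: "h \<in> Rx x" "phi x h \<in> I" unfolding homog_preim_def by blast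
  show "phi y h \<in> I"
  proof (cases "x = y")
    case False
    then have "h = 0" using Rx_disjoint[OF x(1) h] by simp
    then show ?thesis using hideal_2r_mzero[OF I] phi_zero by simp
  qed (use x in simp)
qed (use h in \<open>auto simp: homog_preim_def\<close>)

lemma add_subgroup_hcomp_homog_preim:
  assumes I: "hideal_2r C I"
  shows "add_subgroup {r. \<forall>y. hcomp Rx y r \<in> homog_preim Rx phi I}"
proof -
  have zero: "0 \<in> homog_preim Rx phi I"
    using mem_homog_preim_iff[OF I zero_Rx[of 0]] hideal_2r_mzero[OF I] phi_zero by simp
  have add: "a + b \<in> homog_preim Rx phi I"
    if "a \<in> Rx y" "b \<in> Rx y" "a \<in> homog_preim Rx phi I" "b \<in> homog_preim Rx phi I" for a b y
    using that hideal_2r_madd[OF I _ _ phi_in_hom phi_in_hom] phi_add mem_homog_preim_iff[OF I] add_Rx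
    by metis
  have neg: "- a \<in> homog_preim Rx phi I" if "a \<in> Rx y" "a \<in> homog_preim Rx phi I" for a y
  proof -
    have "cmp C (phi y a) (phi 0 (- 1)) \<in> I"
      using that hideal_2r_cmp_right[OF I _ phi_arr[OF neg_Rx[OF one_deg]]] mem_homog_preim_iff[OF I]
      by (simp add: neg_Rx one_deg)
    then show ?thesis
      using phi_mult_deg0[OF that(1) neg_Rx[OF one_deg]] mem_homog_preim_iff[OF I neg_Rx[OF that(1)]]
      by simp
  qed
  show ?thesis
    unfolding add_subgroup_def using zero
    by (auto simp: hcomp_add hcomp_neg hcomp_homog[OF zero_Rx[of 0]] intro!: add[OF hcomp_Rx hcomp_Rx] neg[OF hcomp_Rx])
qed

lemma restr_eq_hcomp_homog_preim:
  assumes I: "hideal_2r C I"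
  shows "restr Rx phi I = {r. \<forall>y. hcomp Rx y r \<in> homog_preim Rx phi I}"
proof
  have "homog_preim Rx phi I \<subseteq> {r. \<forall>y. hcomp Rx y r \<in> homog_preim Rx phi I}"
    using hcomp_homog mem_homog_preim_iff[OF I zero_Rx[of 0]] hideal_2r_mzero[OF I] phi_zero
    unfolding homog_preim_def by auto
  then show "restr Rx phi I \<subseteq> {r. \<forall>y. hcomp Rx y r \<in> homog_preim Rx phi I}"
    using restr_least add_subgroup_hcomp_homog_preim[OF I] by blast
  show "{r. \<forall>y. hcomp Rx y r \<in> homog_preim Rx phi I} \<subseteq> restr Rx phi I"
    using mem_if_hcomp_mem[OF add_subgroup_restr] homog_preim_subset_restr by blast
qed

lemma phi_mem_if_restr:
  assumes I: "hideal_2r C I" and r: "r \<in> Rx x" "r \<in> restr Rx phi I"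
  shows "phi x r \<in> I"
proof -
  have "hcomp Rx x r \<in> homog_preim Rx phi I" using restr_eq_hcomp_homog_preim[OF I] r(2) by blast
  then show ?thesis using hcomp_homog[OF r(1), of x] mem_homog_preim_iff[OF I r(1)] by simp
qed

lemma phi_mult_mem:
  assumes I: "hideal_2r C I" and h: "h \<in> Rx x" "phi x h \<in> I" and a: "a \<in> Rx y"
  shows "phi (y + x) (a * h) \<in> I" and "phi (x + y) (h * a) \<in> I"
proof -
  have "cmp C (tmor C (phi y a) (idm C (gr (pi x)))) (cmp C (inv_arr C (lun C (gr (pi x)))) (phi x h)) \<in> I"
    using hideal_2r_cmp_left[OF I hideal_2r_cmp_left[OF I h(2)]] h(1) a by simp
  then show "phi (y + x) (a * h) \<in> I"
    using hideal_2r_translate_sym[OF I _ phi_mult[OF a h(1)]] Rx_mult[OF a h(1)] by simp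
  have "cmp C (tmor C (phi x h) (idm C (gr (pi y)))) (cmp C (inv_arr C (lun C (gr (pi y)))) (phi y a)) \<in> I"
    using hideal_2r_cmp_right[OF I hideal_2r_rwhisker[OF I h(2)]] h(1) a by simp
  then show "phi (x + y) (h * a) \<in> I"
    using hideal_2r_translate_sym[OF I _ phi_mult[OF h(1) a]] Rx_mult[OF h(1) a] by simp
qed

lemma hideal_gr_restr:
  assumes I: "hideal_2r C I"
  shows "hideal_gr Rx (restr Rx phi I)"
proof -
  let ?R = "restr Rx phi I"
  let ?M = "{r. \<forall>a. a * r \<in> ?R \<and> r * a \<in> ?R}"
  have "add_subgroup ?M"
    using add_subgroupD[OF add_subgroup_restr[of Rx phi I]] unfolding add_subgroup_def
    by (auto simp: distrib_left distrib_right)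
  moreover have "h \<in> ?M" if hI: "h \<in> homog_preim Rx phi I" for h
  proof -
    obtain x where h: "h \<in> Rx x" "phi x h \<in> I" using hI unfolding homog_preim_def by blast
    have "hcomp Rx y a * h \<in> homog_preim Rx phi I" "h * hcomp Rx y a \<in> homog_preim Rx phi I" for a y
      using phi_mult_mem[OF I h hcomp_Rx] mem_homog_preim_iff[OF I] Rx_mult[OF hcomp_Rx h(1)]
        Rx_mult[OF h(1) hcomp_Rx] by blast+
    then have homogeneous: "hcomp Rx y a * h \<in> ?R" "h * hcomp Rx y a \<in> ?R" for a y
      using homog_preim_subset_restr by blast+
    then show "h \<in> ?M"
      using mult_mem_if_hcomp_mult_mem[OF add_subgroup_restr] by blast
  qed
  ultimately have "?R \<subseteq> ?M" using restr_least by blast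
  moreover have "hcomp Rx x r \<in> ?R" if "r \<in> ?R" for r x
    using that restr_eq_hcomp_homog_preim[OF I] homog_preim_subset_restr by blast
  ultimately show ?thesis unfolding hideal_gr_def using add_subgroup_restr by blast
qed

lemma hideal_2r_extn: "hideal_2r C (extn C Rx phi S)"
  unfolding extn_def using hideal_2r_all_arr by (intro hideal_2r_Inter) auto

lemma phi_mem_extn: "r \<in> Rx x \<Longrightarrow> r \<in> S \<Longrightarrow> phi x r \<in> extn C Rx phi S"
  unfolding extn_def by blast

lemma extn_least:
  "hideal_2r C K \<Longrightarrow> (\<And>x r. r \<in> Rx x \<Longrightarrow> r \<in> S \<Longrightarrow> phi x r \<in> K) \<Longrightarrow> extn C Rx phi S \<subseteq> K"
  unfolding extn_def by blast

lemma extn_restr: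
  assumes I: "hideal_2r C I"
  shows "extn C Rx phi (restr Rx phi I) = I"
proof
  show "extn C Rx phi (restr Rx phi I) \<subseteq> I"
    using phi_mem_if_restr[OF I] by (intro extn_least[OF I])
  show "I \<subseteq> extn C Rx phi (restr Rx phi I)"
  proof
    fix f assume f: "f \<in> I"
    obtain x r where r: "r \<in> Rx x" "translate C f (phi x r)"
      using arr_translate_phi[OF hideal_2r_arr[OF I f]] by blast
    have "phi x r \<in> I" using hideal_2r_translate_sym[OF I f r(2)] r(1) by simp
    then have "r \<in> restr Rx phi I"
      using mem_homog_preim_iff[OF I r(1)] homog_preim_subset_restr by blast
    then show "f \<in> extn C Rx phi (restr Rx phi I)"
      using hideal_2r_translate[OF hideal_2r_extn phi_mem_extn[OF r(1)] r(2)] by blast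
  qed
qed

definition coeff_ideal :: "'r set \<Rightarrow> 'm set" where
  "coeff_ideal J = {f \<in> arr C. \<forall>x r. r \<in> Rx x \<longrightarrow> translate C f (phi x r) \<longrightarrow> r \<in> J}"

lemma coeff_ideal_arr: "f \<in> coeff_ideal J \<Longrightarrow> f \<in> arr C"
  unfolding coeff_ideal_def by blast

lemma coeff_ideal_translate:
  assumes f: "f \<in> coeff_ideal J" and t: "translate C f' f" and f': "f' \<in> arr C"
  shows "f' \<in> coeff_ideal J"
  using f f' translate_trans[OF translate_sym[OF t coeff_ideal_arr[OF f]]] unfolding coeff_ideal_def by auto

lemma mem_if_phi_mem_coeff_ideal: "phi x r \<in> coeff_ideal J \<Longrightarrow> r \<in> Rx x \<Longrightarrow> r \<in> J"
  unfolding coeff_ideal_def using translate_refl by auto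

lemma phi_mem_coeff_ideal:
  assumes J: "hideal_gr Rx J" and r: "r \<in> Rx x" "r \<in> J"
  shows "phi x r \<in> coeff_ideal J"
  unfolding coeff_ideal_def using r hideal_gr_translate_phi[OF J r] translate_sym by auto

lemma param_arr_mem_coeff_ideal_iff:
  assumes J: "hideal_gr Rx J" and a: "a \<in> obj C" and v: "iso_arr C v" "src C v = tobj C a (gr (pi x))"
    and r: "r \<in> Rx x"
  shows "param_arr a v x r \<in> coeff_ideal J \<longleftrightarrow> r \<in> J"
  using translate_param_arr[OF a r v] coeff_ideal_translate[OF phi_mem_coeff_ideal[OF J r]] a r v
  unfolding coeff_ideal_def by auto

lemma coeff_ideal_hom_subgroup:
  assumes J: "hideal_gr Rx J" and ab: "a \<in> obj C" "b \<in> obj C"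
  shows "mzero C a b \<in> coeff_ideal J"
    and "f \<in> coeff_ideal J \<Longrightarrow> g \<in> coeff_ideal J \<Longrightarrow> f \<in> hom C a b \<Longrightarrow> g \<in> hom C a b \<Longrightarrow>
      madd C f g \<in> coeff_ideal J"
    and "f \<in> coeff_ideal J \<Longrightarrow> f \<in> hom C a b \<Longrightarrow> mneg C f \<in> coeff_ideal J"
proof -
  obtain x v where v: "iso_arr C v" "src C v = tobj C a (gr (pi x))" "tgt C v = b"
    and bij: "bij_betw (param_arr a v x) (Rx x) (hom C a b)"
    using hom_param_arr_bij[OF ab] by blast
  let ?F = "param_arr a v x"
  have surj: "\<exists>r \<in> Rx x. f = ?F r" if "f \<in> hom C a b" for f
    using bij_betw_imp_surj_on[OF bij] that by blast
  have add: "?F (r + s) = madd C (?F r) (?F s)" if "r \<in> Rx x" "s \<in> Rx x" for r s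
    using param_arr_add[OF ab(1) v(1,2) that] .
  have zero: "?F 0 = mzero C a b"
    using madd_idem_imp_mzero[OF bij_betw_apply[OF bij zero_Rx]] add[OF zero_Rx zero_Rx] by simp
  have mem: "?F r \<in> coeff_ideal J \<longleftrightarrow> r \<in> J" if "r \<in> Rx x" for r
    using param_arr_mem_coeff_ideal_iff[OF J ab(1) v(1,2) that] .
  note J_sub = add_subgroupD[OF hideal_gr_add_subgroup[OF J]]
  show "mzero C a b \<in> coeff_ideal J" using mem[OF zero_Rx] zero J_sub(1) by simp
  show "madd C f g \<in> coeff_ideal J"
    if "f \<in> coeff_ideal J" "g \<in> coeff_ideal J" "f \<in> hom C a b" "g \<in> hom C a b"
    using that surj add mem add_Rx J_sub(2) by metis
  show "mneg C f \<in> coeff_ideal J" if f: "f \<in> coeff_ideal J" "f \<in> hom C a b"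
  proof -
    obtain r where r: "r \<in> Rx x" "f = ?F r" using surj f(2) by blast
    obtain s where s: "s \<in> Rx x" "mneg C f = ?F s" using surj mneg_hom[OF f(2)] by blast
    have "?F (r + s) = ?F 0"
      using add[OF r(1) s(1)] r(2) s(2) madd_neg[OF f(2)] zero by simp
    then have "s = - r"
      using bij_betw_imp_inj_on[OF bij] add_Rx[OF r(1) s(1)] unfolding inj_on_def
      by (metis add.commute add_eq_0_iff zero_Rx)
    then show ?thesis using mem[OF s(1)] mem[OF r(1)] s(2) r(2) f(1) J_sub(3) by simp
  qed
qed

lemma coeff_ideal_cmp:
  assumes J: "hideal_gr Rx J" and f: "f \<in> arr C" and g: "g \<in> arr C" "src C g = tgt C f"
    and mem: "f \<in> coeff_ideal J \<or> g \<in> coeff_ideal J"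
  shows "cmp C g f \<in> coeff_ideal J"
proof -
  have "f \<in> hom C (src C f) (tgt C f)" "g \<in> hom C (tgt C f) (tgt C g)" using f g by (simp_all add: hom_iff)
  then obtain x r y s where rs: "r \<in> Rx x" "s \<in> Rx y" "translate C f (phi x r)" "translate C g (phi y s)"
    "translate C (cmp C g f) (phi (y + x) (s * r))"
    using cmp_translate_phi_mult by blast
  have "r \<in> J \<or> s \<in> J" using mem rs unfolding coeff_ideal_def by blast
  then have "s * r \<in> J" using hideal_gr_mult[OF J] by blast
  then have "phi (y + x) (s * r) \<in> coeff_ideal J" using phi_mem_coeff_ideal[OF J Rx_mult[OF rs(2,1)]] by blast
  then show ?thesis using coeff_ideal_translate[OF _ rs(5)] f g by simp
qed

lemma hideal_2r_coeff_ideal: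
  assumes J: "hideal_gr Rx J"
  shows "hideal_2r C (coeff_ideal J)"
proof (rule hideal_2rI)
  show "coeff_ideal J \<subseteq> arr C" using coeff_ideal_arr by blast
  show "mzero C a b \<in> coeff_ideal J" if "a \<in> obj C" "b \<in> obj C" for a b
    using coeff_ideal_hom_subgroup(1)[OF J that] .
  show "madd C f g \<in> coeff_ideal J"
    if "f \<in> coeff_ideal J" "g \<in> coeff_ideal J" "f \<in> hom C a b" "g \<in> hom C a b" for a b f g
  proof -
    have "a \<in> obj C" "b \<in> obj C" using that(3) by (auto simp: hom_iff)
    then show ?thesis using coeff_ideal_hom_subgroup(2)[OF J _ _ that] by blast
  qed
  show "mneg C f \<in> coeff_ideal J" if "f \<in> coeff_ideal J" for f
    using coeff_ideal_hom_subgroup(3)[OF J _ _ that arr_in_hom] coeff_ideal_arr[OF that] by simp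
  show "cmp C g f \<in> coeff_ideal J" if "f \<in> coeff_ideal J" "g \<in> arr C" "src C g = tgt C f" for f g
    using coeff_ideal_cmp[OF J coeff_ideal_arr[OF that(1)] that(2,3)] that(1) by blast
  show "cmp C f h \<in> coeff_ideal J" if "f \<in> coeff_ideal J" "h \<in> arr C" "tgt C h = src C f" for f h
    using coeff_ideal_cmp[OF J that(2) coeff_ideal_arr[OF that(1)] that(3)[symmetric]] that(1) by blast
  show "lwhisker a f \<in> coeff_ideal J" if "f \<in> coeff_ideal J" "a \<in> obj C" for f a
    using coeff_ideal_translate[OF that(1) translate_lwhisker[OF that(2)]] coeff_ideal_arr[OF that(1)] that(2)
    by simp
  show "tmor C f (idm C a) \<in> coeff_ideal J" if "f \<in> coeff_ideal J" "a \<in> obj C" for f a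
    using coeff_ideal_translate[OF that(1) translate_rwhisker[OF that(2)]] coeff_ideal_arr[OF that(1)] that(2)
    by simp
qed

lemma extn_eq_coeff_ideal:
  assumes J: "hideal_gr Rx J"
  shows "extn C Rx phi J = coeff_ideal J"
proof
  show "extn C Rx phi J \<subseteq> coeff_ideal J"
    using phi_mem_coeff_ideal[OF J] by (intro extn_least[OF hideal_2r_coeff_ideal[OF J]])
  show "coeff_ideal J \<subseteq> extn C Rx phi J"
  proof
    fix f assume f: "f \<in> coeff_ideal J"
    obtain x r where r: "r \<in> Rx x" "translate C f (phi x r)"
      using arr_translate_phi[OF coeff_ideal_arr[OF f]] by blast
    have "r \<in> J" using f r unfolding coeff_ideal_def by blast
    then show "f \<in> extn C Rx phi J"
      using hideal_2r_translate[OF hideal_2r_extn phi_mem_extn[OF r(1)] r(2)] by blast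
  qed
qed

lemma restr_extn:
  assumes J: "hideal_gr Rx J"
  shows "restr Rx phi (extn C Rx phi J) = J"
proof
  show "restr Rx phi (extn C Rx phi J) \<subseteq> J"
    using hideal_gr_add_subgroup[OF J] mem_if_phi_mem_coeff_ideal
    by (intro restr_least) (auto simp: homog_preim_def extn_eq_coeff_ideal[OF J])
  show "J \<subseteq> restr Rx phi (extn C Rx phi J)"
  proof
    fix r assume "r \<in> J"
    then have "hcomp Rx y r \<in> homog_preim Rx phi (extn C Rx phi J)" for y
      using phi_mem_extn[OF hcomp_Rx] hideal_gr_hcomp[OF J] hcomp_Rx unfolding homog_preim_def by blast
    then show "r \<in> restr Rx phi (extn C Rx phi J)"
      using mem_if_hcomp_mem[OF add_subgroup_restr] homog_preim_subset_restr by blast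
  qed
qed

lemma extn_subset_iff:
  "hideal_gr Rx J \<Longrightarrow> hideal_2r C K \<Longrightarrow> extn C Rx phi J \<subseteq> K \<longleftrightarrow> J \<subseteq> restr Rx phi K"
  using restr_mono extn_mono restr_extn extn_restr by metis

lemma subset_extn_iff:
  "hideal_gr Rx J \<Longrightarrow> hideal_2r C K \<Longrightarrow> K \<subseteq> extn C Rx phi J \<longleftrightarrow> restr Rx phi K \<subseteq> J"
  using restr_mono extn_mono restr_extn extn_restr by metis

section \<open>Primes and the homeomorphism of spectra\<close>

lemma prime_2r_extn:
  assumes P: "hprime_gr Rx P"
  shows "prime_2r C (extn C Rx phi P)"
proof -
  have J: "hideal_gr Rx P" and ne: "P \<noteq> UNIV"
    and prime: "\<And>x y r s. r \<in> Rx x \<Longrightarrow> s \<in> Rx y \<Longrightarrow> r * s \<in> P \<Longrightarrow> r \<in> P \<or> s \<in> P"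
    using P unfolding hprime_gr_def by blast+
  have "phi 0 1 \<notin> extn C Rx phi P"
  proof
    assume "phi 0 1 \<in> extn C Rx phi P"
    then have "1 \<in> P" using mem_if_phi_mem_coeff_ideal one_deg extn_eq_coeff_ideal[OF J] by simp
    then show False using ne hideal_gr_mult[OF J, of 1] by auto
  qed
  then have "extn C Rx phi P \<noteq> arr C" using phi_arr[OF one_deg] by blast
  moreover have "s \<in> extn C Rx phi P \<or> r \<in> extn C Rx phi P"
    if rs: "r \<in> arr C" "s \<in> arr C" "src C s = tgt C r" "cmp C s r \<in> extn C Rx phi P" for r s
  proof -
    have "r \<in> hom C (src C r) (tgt C r)" "s \<in> hom C (tgt C r) (tgt C s)" using rs by (simp_all add: hom_iff)
    then obtain x r' y s' where r's': "r' \<in> Rx x" "s' \<in> Rx y" "translate C r (phi x r')"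
      "translate C s (phi y s')" "translate C (cmp C s r) (phi (y + x) (s' * r'))"
      using cmp_translate_phi_mult by blast
    have "s' * r' \<in> P"
      using rs(4) r's'(5) Rx_mult[OF r's'(2,1)] unfolding extn_eq_coeff_ideal[OF J] coeff_ideal_def by blast
    then have "s' \<in> P \<or> r' \<in> P" using prime[OF r's'(2,1)] by blast
    then show ?thesis
      using coeff_ideal_translate[OF phi_mem_coeff_ideal[OF J]] r's' rs(1,2)
      unfolding extn_eq_coeff_ideal[OF J] by blast
  qed
  ultimately show ?thesis unfolding prime_2r_def using hideal_2r_extn by blast
qed

lemma hprime_gr_restr:
  assumes Q: "prime_2r C Q"
  shows "hprime_gr Rx (restr Rx phi Q)"
proof -
  have I: "hideal_2r C Q" and ne: "Q \<noteq> arr C"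
    and prime: "\<And>r s. r \<in> arr C \<Longrightarrow> s \<in> arr C \<Longrightarrow> src C s = tgt C r \<Longrightarrow> cmp C s r \<in> Q \<Longrightarrow> s \<in> Q \<or> r \<in> Q"
    using Q unfolding prime_2r_def by blast+
  have "restr Rx phi Q \<noteq> UNIV"
  proof
    assume "restr Rx phi Q = UNIV"
    then have "extn C Rx phi UNIV = Q" using extn_restr[OF I] by simp
    moreover have "arr C \<subseteq> extn C Rx phi UNIV"
      using arr_translate_phi hideal_2r_translate[OF hideal_2r_extn phi_mem_extn] by blast
    ultimately show False using ne hideal_2r_arr[OF I] by blast
  qed
  moreover have "r \<in> restr Rx phi Q \<or> s \<in> restr Rx phi Q"
    if rs: "r \<in> Rx x" "s \<in> Rx y" "r * s \<in> restr Rx phi Q" for x y r s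
  proof -
    have "phi (x + y) (r * s) \<in> Q" using phi_mem_if_restr[OF I Rx_mult[OF rs(1,2)] rs(3)] .
    then have "cmp C (tmor C (phi x r) (idm C (gr (pi y)))) (cmp C (inv_arr C (lun C (gr (pi y)))) (phi y s)) \<in> Q"
      using hideal_2r_translate[OF I _ phi_mult[OF rs(1,2)]] by blast
    then have "tmor C (phi x r) (idm C (gr (pi y))) \<in> Q \<or> cmp C (inv_arr C (lun C (gr (pi y)))) (phi y s) \<in> Q"
      using prime rs by simp
    moreover have "phi x r \<in> Q" if "tmor C (phi x r) (idm C (gr (pi y))) \<in> Q"
      using hideal_2r_translate_sym[OF I that translate_rwhisker[OF gr_pi_obj phi_arr[OF rs(1)]]] rs(1) by simp
    moreover have "phi y s \<in> Q" if "cmp C (inv_arr C (lun C (gr (pi y)))) (phi y s) \<in> Q"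
      using hideal_2r_cmp_left[OF I that lun_arr[OF gr_pi_obj[of y]]] rs(2) by simp
    ultimately show ?thesis using mem_homog_preim_iff[OF I] rs(1,2) homog_preim_subset_restr by blast
  qed
  ultimately show ?thesis unfolding hprime_gr_def using hideal_gr_restr[OF I] by blast
qed

lemma topspace_Spec_h: "topspace (Spec_h Rx) = {P. hprime_gr Rx P}"
  unfolding Spec_h_def topology_generated_by_topspace hprime_gr_def by blast

lemma topspace_Spc: "topspace (Spc C) = {P. prime_2r C P}"
  unfolding Spc_def topology_generated_by_topspace prime_2r_def hideal_2r_def by blast

lemma continuous_map_extn: "continuous_map (Spec_h Rx) (Spc C) (extn C Rx phi)"
  unfolding Spc_def
proof (rule continuous_on_generated_topo)
  show "extn C Rx phi ` topspace (Spec_h Rx) \<subseteq> \<Union>{{P. prime_2r C P \<and> \<not> S \<subseteq> P} |S. S \<subseteq> arr C}"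
    using prime_2r_extn topspace_Spc unfolding topspace_Spec_h Spc_def by auto
  fix U assume "U \<in> {{P. prime_2r C P \<and> \<not> S \<subseteq> P} |S. S \<subseteq> arr C}"
  then obtain S where S: "S \<subseteq> arr C" and U: "U = {P. prime_2r C P \<and> \<not> S \<subseteq> P}" by blast
  define K where "K = \<Inter>{K. hideal_2r C K \<and> S \<subseteq> K}"
  have K: "hideal_2r C K" unfolding K_def using hideal_2r_all_arr S by (intro hideal_2r_Inter) auto
  have "S \<subseteq> extn C Rx phi P \<longleftrightarrow> restr Rx phi K \<subseteq> P" if "hprime_gr Rx P" for P
    using subset_extn_iff[OF _ K] that hideal_2r_extn unfolding hprime_gr_def K_def by blast
  then have "extn C Rx phi -` U \<inter> topspace (Spec_h Rx) = {P. hprime_gr Rx P \<and> \<not> restr Rx phi K \<subseteq> P}"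
    unfolding U topspace_Spec_h using prime_2r_extn by auto
  moreover have "openin (Spec_h Rx) {P. hprime_gr Rx P \<and> \<not> restr Rx phi K \<subseteq> P}"
    unfolding Spec_h_def by (auto intro: topology_generated_by_Basis)
  ultimately show "openin (Spec_h Rx) (extn C Rx phi -` U \<inter> topspace (Spec_h Rx))" by simp
qed

lemma continuous_map_restr: "continuous_map (Spc C) (Spec_h Rx) (restr Rx phi)"
  unfolding Spec_h_def
proof (rule continuous_on_generated_topo)
  show "restr Rx phi ` topspace (Spc C) \<subseteq> \<Union>{{P. hprime_gr Rx P \<and> \<not> S \<subseteq> P} |S. True}"
    using hprime_gr_restr topspace_Spec_h unfolding topspace_Spc Spec_h_def by auto
  fix U assume "U \<in> {{P. hprime_gr Rx P \<and> \<not> S \<subseteq> P} |S. True}"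
  then obtain S where U: "U = {P. hprime_gr Rx P \<and> \<not> S \<subseteq> P}" by blast
  define J where "J = \<Inter>{J. hideal_gr Rx J \<and> S \<subseteq> J}"
  have J: "hideal_gr Rx J" unfolding J_def by (rule hideal_gr_Inter) blast
  have "S \<subseteq> restr Rx phi Q \<longleftrightarrow> extn C Rx phi J \<subseteq> Q" if "prime_2r C Q" for Q
    using extn_subset_iff[OF J] that hideal_gr_restr unfolding prime_2r_def J_def by blast
  then have "restr Rx phi -` U \<inter> topspace (Spc C) = {Q. prime_2r C Q \<and> \<not> extn C Rx phi J \<subseteq> Q}"
    unfolding U topspace_Spc using hprime_gr_restr by auto
  moreover have "openin (Spc C) {Q. prime_2r C Q \<and> \<not> extn C Rx phi J \<subseteq> Q}"
    unfolding Spc_def using hideal_2r_arr[OF hideal_2r_extn] by (auto intro: topology_generated_by_Basis)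
  ultimately show "openin (Spc C) (restr Rx phi -` U \<inter> topspace (Spc C))" by simp
qed

end

theorem theoremA15:
  fixes C :: "('o, 'm, 'z) two_ring_scheme"
    and Rx :: "'g::ab_group_add \<Rightarrow> 'r::ring_1 set"
    and tau :: "'g \<Rightarrow> 'g \<Rightarrow> 'r"
    and pi :: "'g \<Rightarrow> 'o set"
    and gr :: "'o set \<Rightarrow> 'o"
    and phi :: "'g \<Rightarrow> 'r \<Rightarrow> 'm"
  assumes "tightening C Rx tau pi gr phi"
  shows "(\<forall>I. hideal_2r C I \<longrightarrow> hideal_gr Rx (restr Rx phi I) \<and> extn C Rx phi (restr Rx phi I) = I)
    \<and> (\<forall>I. hideal_gr Rx I \<longrightarrow> hideal_2r C (extn C Rx phi I) \<and> restr Rx phi (extn C Rx phi I) = I)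
    \<and> (\<forall>I J. hideal_2r C I \<longrightarrow> hideal_2r C J \<longrightarrow> I \<subseteq> J \<longrightarrow> restr Rx phi I \<subseteq> restr Rx phi J)
    \<and> (\<forall>I J. hideal_gr Rx I \<longrightarrow> hideal_gr Rx J \<longrightarrow> I \<subseteq> J \<longrightarrow> extn C Rx phi I \<subseteq> extn C Rx phi J)
    \<and> homeomorphic_maps (Spec_h Rx) (Spc C) (extn C Rx phi) (restr Rx phi)"
proof -
  interpret tightening C Rx tau pi gr phi by (rule assms)
  have "homeomorphic_maps (Spec_h Rx) (Spc C) (extn C Rx phi) (restr Rx phi)"
    unfolding homeomorphic_maps_def topspace_Spec_h topspace_Spc
    using continuous_map_extn continuous_map_restr extn_restr restr_extn
    by (auto simp: hprime_gr_def prime_2r_def)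
  then show ?thesis
    using hideal_gr_restr extn_restr hideal_2r_extn restr_extn restr_mono[of _ _ Rx phi] extn_mono[of _ _ C Rx phi]
    by simp
qed

end
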